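(* Let $\vec s:[0,1]\to\mathbb{R}^2$ and $\mathbf{\Gamma}=\operatorname{range}(\vec s)$ be as defined in the context. Then $\mathbf{\Gamma}$ is a simple curve from $\vec s(0)=(0,0)$ to $\vec s(1)=\left(0,\frac{5^3(e-1)^3}{6^3\cdot 8\pi(e^3-1)}\right)$.
   Context: Construction. For reals $a<b$ define $\varphi_{a,b}:[a,b]\to\mathbb{R}$ by $\varphi_{a,b}(t)=\frac{b-a}{4}\sin\frac{2\pi(t-a)}{b-a}$, and $\xi_{a,b}:[a,b]\to\mathbb{R}$ by $\xi_{a,b}(t)=-\varphi_{a,\frac{a+b}{2}}(t)$ for $a\le t\le\frac{a+b}{2}$ and $\xi_{a,b}(t)=\varphi_{\frac{a+b}{2},b}(t)$ for $\frac{a+b}{2}\le t\le b$. For $a<b$ and a positive integer $n$, let $d_i=\frac{a+5b}{6}+i\frac{b-a}{6n}$ for $0\le i\le n$, and define $\psi_{a,b,n}:[a,b]\to\mathbb{R}$ by $\psi_{a,b,n}(t)=\varphi_{a,d_0}(t)$ for $a\le t\le d_0$ and $\psi_{a,b,n}(t)=\xi_{d_{i-1},d_i}(t)$ for $d_{i-1}\le t\le d_i$, $1\le i\le n$. Fix a standard enumeration $M_1,M_2,\dots$ of deterministic Turing machines taking positive integer inputs, and let $\tau(n)\in\mathbb{N}\cup\{\infty\}$ be the number of steps executed by $M_n$ on input $n$ ($\infty$ if it does not halt). For $n\in\mathbb{N}$ let $t_n=1-e^{-n}$, and for $n\ge1$ let $t_n^-=\frac{t_{n-1}+4t_n}{5}$,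 $t_n^+=\frac{6t_n-t_{n-1}}{5}$. Define $a_x:[0,1]\to\mathbb{R}$ by $a_x(t)=-2^{-(n+\tau(n))}\xi_{t_n^-,t_n^+}(t)$ if $t_n^-\le t<t_n^+$ for some $n\ge1$, and $a_x(t)=0$ if no such $n$ exists, with the convention $2^{-\infty}=0$. Define $a_y:[0,1]\to\mathbb{R}$ by $a_y(t)=\psi_{t_{n-1},t_n,n}(t)$ where $n$ is the unique positive integer with $t_{n-1}\le t<t_n$ (for $0\le t<1$), and $a_y(1)=0$. Let $v_x(t)=\int_0^t a_x$, $v_y(t)=\int_0^t a_y$, $s_x(t)=\int_0^t v_x$, $s_y(t)=\int_0^t v_y$, and $\vec s=(s_x,s_y)$; $\mathbf{\Gamma}=\operatorname{range}(\vec s)$. A curve is simple if it is the range of a one-to-one continuous map from a compact interval. *)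

theory Defs
  imports "HOL-Analysis.Analysis" "HOL-Library.Extended_Nat"
begin

definition phi :: "real \<Rightarrow> real \<Rightarrow> real \<Rightarrow> real" where
  "phi a b t = (b - a) / 4 * sin (2 * pi * (t - a) / (b - a))"

definition xi :: "real \<Rightarrow> real \<Rightarrow> real \<Rightarrow> real" where
  "xi a b t = (if t \<le> (a + b) / 2 then - phi a ((a + b) / 2) t else phi ((a + b) / 2) b t)"

definition dpt :: "real \<Rightarrow> real \<Rightarrow> nat \<Rightarrow> nat \<Rightarrow> real" where
  "dpt a b n i = (a + 5 * b) / 6 + real i * (b - a) / (6 * real n)"

text \<open>For d_{i-1} < t <= d_i (1 <= i <= n) the index is i = ceiling((t - d_0) 6n/(b-a)).
  At common endpoints the pieces agree (all vanish), so the choice is immaterial.\<close>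
definition psi :: "real \<Rightarrow> real \<Rightarrow> nat \<Rightarrow> real \<Rightarrow> real" where
  "psi a b n t =
     (if t \<le> dpt a b n 0 then phi a (dpt a b n 0) t
      else (let i = nat \<lceil>(t - dpt a b n 0) * (6 * real n) / (b - a)\<rceil>
            in xi (dpt a b n (i - 1)) (dpt a b n i) t))"

definition tt :: "nat \<Rightarrow> real" where
  "tt n = 1 - exp (- real n)"

definition ttm :: "nat \<Rightarrow> real" where
  "ttm n = (tt (n - 1) + 4 * tt n) / 5"

definition ttp :: "nat \<Rightarrow> real" where
  "ttp n = (6 * tt n - tt (n - 1)) / 5"

definition wt :: "(nat \<Rightarrow> enat) \<Rightarrow> nat \<Rightarrow> real" where
  "wt tau n = (case tau n of enat k \<Rightarrow> (1/2) ^ (n + k) | \<infinity> \<Rightarrow> 0)"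

definition acc_x :: "(nat \<Rightarrow> enat) \<Rightarrow> real \<Rightarrow> real" where
  "acc_x tau t =
     (if \<exists>n\<ge>1. ttm n \<le> t \<and> t < ttp n
      then (let n = (THE n. n \<ge> 1 \<and> ttm n \<le> t \<and> t < ttp n)
            in - wt tau n * xi (ttm n) (ttp n) t)
      else 0)"

definition acc_y :: "real \<Rightarrow> real" where
  "acc_y t =
     (if 0 \<le> t \<and> t < 1
      then (let n = (THE n. n \<ge> 1 \<and> tt (n - 1) \<le> t \<and> t < tt n)
            in psi (tt (n - 1)) (tt n) n t)
      else 0)"

definition vel_x :: "(nat \<Rightarrow> enat) \<Rightarrow> real \<Rightarrow> real" where
  "vel_x tau t = integral {0..t} (acc_x tau)"

definition vel_y :: "real \<Rightarrow> real" where
  "vel_y t = integral {0..t} acc_y"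

definition pos_x :: "(nat \<Rightarrow> enat) \<Rightarrow> real \<Rightarrow> real" where
  "pos_x tau t = integral {0..t} (vel_x tau)"

definition pos_y :: "real \<Rightarrow> real" where
  "pos_y t = integral {0..t} vel_y"

definition svec :: "(nat \<Rightarrow> enat) \<Rightarrow> real \<Rightarrow> real \<times> real" where
  "svec tau t = (pos_x tau t, pos_y t)"

definition Gam :: "(nat \<Rightarrow> enat) \<Rightarrow> (real \<times> real) set" where
  "Gam tau = svec tau ` {0..1}"

end

theory Submission
  imports Defs
begin

text \<open>
  On \<open>[t\<^sub>n\<^sub>-\<^sub>1, t\<^sub>n]\<close> the vertical motion is one bump \<open>\<phi>\<close>, which raises \<open>s\<^sub>y\<close> by
  \<open>c\<^sub>n\<^sup>3/(8\<pi>)\<close> with \<open>c\<^sub>n = 5e\<^sup>-\<^sup>n(e-1)/6\<close> and returns \<open>v\<^sub>y\<close> to 0, followed by \<open>n\<close> small wiggles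
  \<open>\<xi>\<close>, during which \<open>s\<^sub>y\<close> dips slightly and comes back. The horizontal motion is zero except on
  the windows \<open>[t\<^sub>n\<^sup>-, t\<^sub>n\<^sup>+]\<close>, where \<open>s\<^sub>x\<close> makes one excursion scaled by \<open>2\<^sup>-\<^sup>(\<^sup>n\<^sup>+\<^sup>\<tau>\<^sup>(\<^sup>n\<^sup>)\<^sup>)\<close>,
  increasing on \<open>[t\<^sub>n\<^sup>-, t\<^sub>n]\<close>. All these motions have closed-form antiderivatives, so
  \<open>s\<^sub>y(t\<^sub>n) = \<Sum>\<^sub>k\<^sub>\<le>\<^sub>n c\<^sub>k\<^sup>3/(8\<pi>)\<close>, \<open>s\<^sub>x(t\<^sub>n\<^sup>+) = 0\<close>, and since \<open>|v| \<le> 4(1-t)\<close> the positions are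
  continuous at \<open>t = 1\<close>, where the geometric series gives the stated endpoint.

  The curve is injective except where it retraces: during the wiggles, \<open>s\<^sub>y\<close> only
  revisits heights between \<open>s\<^sub>y(q\<^sub>n)\<close> and \<open>s\<^sub>y(t\<^sub>n)\<close>, with \<open>q\<^sub>n\<close> three quarters into
  the bump. If \<open>M\<^sub>n\<close> halts, the excursion of \<open>s\<^sub>x\<close> (strictly increasing there) separates
  these points. If not, the retraced points lie on the vertical segment \<open>x = 0\<close> between these
  heights, and replacing \<open>s\<^sub>y\<close> on \<open>[q\<^sub>n, t\<^sub>n]\<close> by a linear parametrization of that segment
  gives an arc with the same image.
\<close>

section \<open>Closed-form antiderivatives\<close>

text \<open>\<open>arccos (cos x)\<close> is the distance from \<open>x\<close> to \<open>2\<pi>\<int>\<close>; subtracting \<open>|sin x| cos x\<close>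
  gives a continuous antiderivative of \<open>2 sin x |sin x|\<close>.\<close>
definition sin_abs_sin_primitive :: "real \<Rightarrow> real" where
  "sin_abs_sin_primitive x = arccos (cos x) - \<bar>sin x\<bar> * cos x"

lemma has_real_derivative_sin_abs_sin:
  assumes "sin x \<noteq> 0"
  shows "((\<lambda>x. sin x * \<bar>sin x\<bar>) has_real_derivative 2 * \<bar>sin x\<bar> * cos x) (at x)"
proof (cases "sin x > 0")
  case True
  have o: "open {y::real. 0 < sin y}" by (rule open_Collect_less) (auto intro: continuous_intros)
  have "((\<lambda>x. sin x * sin x) has_real_derivative 2 * \<bar>sin x\<bar> * cos x) (at x)"
    using True by (auto intro!: derivative_eq_intros)
  then show ?thesis
    by (rule has_field_derivative_transform_within_open[OF _ o]) (use True in auto)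
next
  case False
  then have neg: "sin x < 0" using assms by auto
  have o: "open {y::real. sin y < 0}" by (rule open_Collect_less) (auto intro: continuous_intros)
  have "((\<lambda>x. - (sin x * sin x)) has_real_derivative 2 * \<bar>sin x\<bar> * cos x) (at x)"
    using neg by (auto intro!: derivative_eq_intros)
  then show ?thesis
    by (rule has_field_derivative_transform_within_open[OF _ o]) (use neg in auto)
qed

lemma has_real_derivative_sin_abs_sin_primitive:
  assumes "sin x \<noteq> 0"
  shows "(sin_abs_sin_primitive has_real_derivative 2 * sin x * \<bar>sin x\<bar>) (at x)"
proof -
  have "(sin x)\<^sup>2 > 0" using assms by simp
  then have "(cos x)\<^sup>2 < 1" using sin_cos_squared_add[of x] by linarith
  then have "\<bar>cos x\<bar> < 1" by (simp add: abs_square_less_1)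
  then have cos_bounds: "- 1 < cos x" "cos x < 1" by auto
  have sq: "sqrt (1 - (cos x)\<^sup>2) = \<bar>sin x\<bar>"
    by (simp add: sin_squared_eq[symmetric])
  have d_arccos: "((\<lambda>x. arccos (cos x)) has_real_derivative (sin x / \<bar>sin x\<bar>)) (at x)"
  proof -
    have "((\<lambda>x. arccos (cos x)) has_real_derivative inverse (- sqrt (1 - (cos x)\<^sup>2)) * - sin x) (at x)"
      by (rule DERIV_chain2[where g=cos, OF DERIV_arccos[OF cos_bounds]])
         (auto intro!: derivative_eq_intros)
    then show ?thesis unfolding sq by (simp add: divide_inverse mult.commute)
  qed
  have d_prod: "((\<lambda>x. sin x * cos x) has_real_derivative (cos x * cos x - sin x * sin x)) (at x)"
    by (auto intro!: derivative_eq_intros)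
  show ?thesis
  proof (cases "sin x > 0")
    case True
    have o: "open {y::real. 0 < sin y}" by (rule open_Collect_less) (auto intro: continuous_intros)
    have "((\<lambda>x. arccos (cos x) - sin x * cos x) has_real_derivative
        (sin x / \<bar>sin x\<bar> - (cos x * cos x - sin x * sin x))) (at x)"
      by (rule DERIV_diff[OF d_arccos d_prod])
    then have "(sin_abs_sin_primitive has_real_derivative
        (sin x / \<bar>sin x\<bar> - (cos x * cos x - sin x * sin x))) (at x)"
      by (rule has_field_derivative_transform_within_open[OF _ o])
         (use True in \<open>auto simp: sin_abs_sin_primitive_def\<close>)
    moreover have "sin x / \<bar>sin x\<bar> - (cos x * cos x - sin x * sin x) = 2 * sin x * \<bar>sin x\<bar>"
      using True sin_cos_squared_add[of x] by (simp add: power2_eq_square)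
    ultimately show ?thesis by simp
  next
    case False
    then have neg: "sin x < 0" using assms by auto
    have o: "open {y::real. sin y < 0}" by (rule open_Collect_less) (auto intro: continuous_intros)
    have "((\<lambda>x. arccos (cos x) + sin x * cos x) has_real_derivative
        (sin x / \<bar>sin x\<bar> + (cos x * cos x - sin x * sin x))) (at x)"
      by (rule DERIV_add[OF d_arccos d_prod])
    then have "(sin_abs_sin_primitive has_real_derivative
        (sin x / \<bar>sin x\<bar> + (cos x * cos x - sin x * sin x))) (at x)"
      by (rule has_field_derivative_transform_within_open[OF _ o])
         (use neg in \<open>auto simp: sin_abs_sin_primitive_def\<close>)
    moreover have "sin x / \<bar>sin x\<bar> + (cos x * cos x - sin x * sin x) = 2 * sin x * \<bar>sin x\<bar>"
      using neg sin_cos_squared_add[of x] by (simp add: power2_eq_square)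
    ultimately show ?thesis by simp
  qed
qed

lemma continuous_on_sin_abs_sin_primitive: "continuous_on S sin_abs_sin_primitive"
  unfolding sin_abs_sin_primitive_def[abs_def] by (intro continuous_intros) auto

lemma sin_abs_sin_primitive_nonneg: "sin_abs_sin_primitive x \<ge> 0"
proof -
  define p where "p = arccos (cos x)"
  have p: "0 \<le> p" "p \<le> pi" using arccos_bounded[of "cos x"] by (auto simp: p_def)
  have cos_p: "cos p = cos x" by (simp add: p_def)
  have sin_p: "sin p = \<bar>sin x\<bar>"
    using sin_arccos_abs[of "cos x"] by (simp add: p_def sin_squared_eq[symmetric])
  have "sin p * cos p = sin (2 * p) / 2" by (simp add: sin_double)
  also have "\<dots> \<le> p" using abs_sin_x_le_abs_x[of "2 * p"] p by auto
  finally show ?thesis unfolding sin_abs_sin_primitive_def p_def[symmetric] using cos_p sin_p by simp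
qed

lemma sin_abs_sin_primitive_le: "sin_abs_sin_primitive x \<le> pi + 1"
proof -
  have "\<bar>\<bar>sin x\<bar> * cos x\<bar> \<le> 1"
    unfolding abs_mult by (rule mult_le_one) auto
  then have "- (\<bar>sin x\<bar> * cos x) \<le> 1" by (simp add: abs_le_iff)
  moreover have "arccos (cos x) \<le> pi" using arccos_bounded[of "cos x"] by auto
  ultimately show ?thesis unfolding sin_abs_sin_primitive_def by linarith
qed

text \<open>\<open>|sin|\<close> is not differentiable at the zeros of \<open>sin\<close>, but these are finite in a compact
  interval, which suffices for the fundamental theorem of calculus.\<close>
lemma finite_zeros_sin_affine:
  assumes "h > 0"
  shows "finite {s \<in> {a..b}. sin (2 * pi * (s - d) / h) = 0}"
proof -
  have "{s \<in> {a..b}. sin (2 * pi * (s - d) / h) = 0} \<subseteq>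
      (\<lambda>i::int. d + of_int i * h / 2) ` {\<lfloor>2 * (a - d) / h\<rfloor>..\<lceil>2 * (b - d) / h\<rceil>}"
  proof
    fix s assume s: "s \<in> {s \<in> {a..b}. sin (2 * pi * (s - d) / h) = 0}"
    then obtain i :: int where "2 * pi * (s - d) / h = of_int i * pi"
      by (auto simp: sin_zero_iff_int2)
    then have "pi * (2 * (s - d)) = pi * (of_int i * h)" using assms by (simp add: field_simps)
    then have "2 * (s - d) = of_int i * h" by simp
    then have s_eq: "s = d + of_int i * h / 2" by (simp add: field_simps)
    have i_eq: "of_int i = 2 * (s - d) / h" using s_eq assms by (simp add: field_simps)
    have "2 * (a - d) / h \<le> 2 * (s - d) / h" "2 * (s - d) / h \<le> 2 * (b - d) / h"
      using s assms by (auto intro!: divide_right_mono)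
    then have "\<lfloor>2 * (a - d) / h\<rfloor> \<le> \<lfloor>of_int i :: real\<rfloor>" "\<lceil>of_int i :: real\<rceil> \<le> \<lceil>2 * (b - d) / h\<rceil>"
      unfolding i_eq by (auto intro: floor_mono ceiling_mono)
    then have "\<lfloor>2 * (a - d) / h\<rfloor> \<le> i" "i \<le> \<lceil>2 * (b - d) / h\<rceil>" by simp_all
    then show "s \<in> (\<lambda>i::int. d + of_int i * h / 2) ` {\<lfloor>2 * (a - d) / h\<rfloor>..\<lceil>2 * (b - d) / h\<rceil>}"
      using s_eq by auto
  qed
  then show ?thesis by (rule finite_subset) auto
qed

lemma has_integral_off_sin_zeros:
  assumes h: "h > 0" and ab: "a \<le> b" and F: "continuous_on {a..b} F"
    and F': "\<And>x. sin (2 * pi * (x - d) / h) \<noteq> 0 \<Longrightarrow> (F has_real_derivative f x) (at x)"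
  shows "(f has_integral (F b - F a)) {a..b}"
proof (rule fundamental_theorem_of_calculus_interior_strong[OF finite_zeros_sin_affine[OF h, of a b d] ab _ F])
  fix x assume "x \<in> {a<..<b} - {s \<in> {a..b}. sin (2 * pi * (s - d) / h) = 0}"
  then have "sin (2 * pi * (x - d) / h) \<noteq> 0" by auto
  then show "(F has_vector_derivative f x) (at x)"
    using F' has_real_derivative_iff_has_vector_derivative by blast
qed

text \<open>On \<open>[d, d + h]\<close>, \<open>wave_acc d h = - \<xi>\<^sub>d\<^sub>,\<^sub>d\<^sub>+\<^sub>h\<close>; it has period \<open>h\<close>, and \<open>wave_vel\<close>,
  \<open>wave_pos\<close> are its successive antiderivatives vanishing at \<open>d\<close>.\<close>
definition wave_acc :: "real \<Rightarrow> real \<Rightarrow> real \<Rightarrow> real" where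
  "wave_acc d h t = h / 4 * (\<bar>sin (2 * pi * (t - d) / h)\<bar> * cos (2 * pi * (t - d) / h))"

definition wave_vel :: "real \<Rightarrow> real \<Rightarrow> real \<Rightarrow> real" where
  "wave_vel d h t = h\<^sup>2 / (16 * pi) * (sin (2 * pi * (t - d) / h) * \<bar>sin (2 * pi * (t - d) / h)\<bar>)"

definition wave_pos :: "real \<Rightarrow> real \<Rightarrow> real \<Rightarrow> real" where
  "wave_pos d h t = h ^ 3 / (64 * pi\<^sup>2) * sin_abs_sin_primitive (2 * pi * (t - d) / h)"

lemma wave_vel_has_derivative:
  assumes h: "h > 0" and s: "sin (2 * pi * (x - d) / h) \<noteq> 0"
  shows "(wave_vel d h has_real_derivative wave_acc d h x) (at x)"
proof -
  have "((\<lambda>x. h\<^sup>2 / (16 * pi) * (\<lambda>x. sin x * \<bar>sin x\<bar>) (2 * pi * (x - d) / h)) has_real_derivative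
     h\<^sup>2 / (16 * pi) * ((2 * \<bar>sin (2 * pi * (x - d) / h)\<bar> * cos (2 * pi * (x - d) / h)) * (2 * pi / h))) (at x)"
    by (intro DERIV_cmult DERIV_chain2[where g="\<lambda>x. 2 * pi * (x - d) / h",
          OF has_real_derivative_sin_abs_sin[OF s]])
       (use h in \<open>auto intro!: derivative_eq_intros\<close>)
  moreover have "h\<^sup>2 / (16 * pi) * ((2 * \<bar>sin (2 * pi * (x - d) / h)\<bar> * cos (2 * pi * (x - d) / h)) * (2 * pi / h))
      = wave_acc d h x" using h by (simp add: wave_acc_def power2_eq_square field_simps)
  ultimately show ?thesis by (simp add: wave_vel_def[abs_def])
qed

lemma wave_pos_has_derivative:
  assumes h: "h > 0" and s: "sin (2 * pi * (x - d) / h) \<noteq> 0"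
  shows "(wave_pos d h has_real_derivative wave_vel d h x) (at x)"
proof -
  have "((\<lambda>x. h ^ 3 / (64 * pi\<^sup>2) * sin_abs_sin_primitive (2 * pi * (x - d) / h)) has_real_derivative
     h ^ 3 / (64 * pi\<^sup>2) * ((2 * sin (2 * pi * (x - d) / h) * \<bar>sin (2 * pi * (x - d) / h)\<bar>) * (2 * pi / h))) (at x)"
    by (intro DERIV_cmult DERIV_chain2[where g="\<lambda>x. 2 * pi * (x - d) / h",
          OF has_real_derivative_sin_abs_sin_primitive[OF s]])
       (use h in \<open>auto intro!: derivative_eq_intros\<close>)
  moreover have "h ^ 3 / (64 * pi\<^sup>2) * ((2 * sin (2 * pi * (x - d) / h) * \<bar>sin (2 * pi * (x - d) / h)\<bar>) * (2 * pi / h))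
      = wave_vel d h x" using h by (simp add: wave_vel_def power2_eq_square power3_eq_cube field_simps)
  ultimately show ?thesis by (simp add: wave_pos_def[abs_def])
qed

lemma continuous_on_wave_vel: "h > 0 \<Longrightarrow> continuous_on S (wave_vel d h)"
  unfolding wave_vel_def[abs_def] by (intro continuous_intros) auto

lemma continuous_on_wave_pos: "h > 0 \<Longrightarrow> continuous_on S (wave_pos d h)"
  unfolding wave_pos_def[abs_def]
  by (intro continuous_intros continuous_on_compose2[OF continuous_on_sin_abs_sin_primitive[of UNIV]])
     auto

lemma wave_acc_has_integral:
  assumes "h > 0" "a \<le> b"
  shows "(wave_acc d h has_integral (wave_vel d h b - wave_vel d h a)) {a..b}"
  by (rule has_integral_off_sin_zeros[OF assms continuous_on_wave_vel[OF assms(1)]])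
     (rule wave_vel_has_derivative[OF assms(1)])

lemma wave_vel_has_integral:
  assumes "h > 0" "a \<le> b"
  shows "(wave_vel d h has_integral (wave_pos d h b - wave_pos d h a)) {a..b}"
  by (rule has_integral_off_sin_zeros[OF assms continuous_on_wave_pos[OF assms(1)]])
     (rule wave_pos_has_derivative[OF assms(1)])

lemma wave_vel_start: "wave_vel d h d = 0" and wave_pos_start: "wave_pos d h d = 0"
  by (simp_all add: wave_vel_def wave_pos_def sin_abs_sin_primitive_def)

lemma wave_vel_period: "h > 0 \<Longrightarrow> wave_vel d h (d + real k * h) = 0"
  and wave_pos_period: "h > 0 \<Longrightarrow> wave_pos d h (d + real k * h) = 0"
proof -
  assume "h > 0"
  then have angle: "2 * pi * (d + real k * h - d) / h = 2 * real k * pi" by (simp add: field_simps)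
  show "wave_vel d h (d + real k * h) = 0" unfolding wave_vel_def angle by simp
  show "wave_pos d h (d + real k * h) = 0"
    unfolding wave_pos_def sin_abs_sin_primitive_def angle by simp
qed

lemma abs_wave_vel_le: "h > 0 \<Longrightarrow> \<bar>wave_vel d h t\<bar> \<le> h\<^sup>2 / (16 * pi)"
proof -
  assume h: "h > 0"
  have "\<bar>sin (2 * pi * (t - d) / h)\<bar> * \<bar>sin (2 * pi * (t - d) / h)\<bar> \<le> 1"
    by (rule mult_le_one) auto
  moreover have "\<bar>wave_vel d h t\<bar> =
      h\<^sup>2 / (16 * pi) * (\<bar>sin (2 * pi * (t - d) / h)\<bar> * \<bar>sin (2 * pi * (t - d) / h)\<bar>)"
    by (simp add: wave_vel_def abs_mult)
  ultimately show ?thesis using mult_left_le[of _ "h\<^sup>2 / (16 * pi)"] by simp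
qed

lemma wave_pos_nonneg: "h > 0 \<Longrightarrow> 0 \<le> wave_pos d h t"
  using sin_abs_sin_primitive_nonneg by (simp add: wave_pos_def)

lemma wave_pos_le: "h > 0 \<Longrightarrow> wave_pos d h t \<le> h ^ 3 / (64 * pi\<^sup>2) * (pi + 1)"
  unfolding wave_pos_def by (rule mult_left_mono[OF sin_abs_sin_primitive_le]) simp

lemma wave_pos_strict_mono:
  assumes h: "h > 0" and st: "d \<le> s" "s < s'" "s' \<le> d + h / 2"
  shows "wave_pos d h s < wave_pos d h s'"
proof (rule DERIV_pos_imp_increasing_open[OF st(2) _ continuous_on_wave_pos[OF h]])
  fix x assume x: "s < x" "x < s'"
  have "pi * (2 * (x - d)) < pi * h"
    using x st h by (intro mult_strict_left_mono) auto
  then have "0 < 2 * pi * (x - d) / h" "2 * pi * (x - d) / h < pi"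
    using x st h by (auto simp: field_simps)
  then have sin_pos: "sin (2 * pi * (x - d) / h) > 0" by (rule sin_gt_zero)
  then have "wave_vel d h x > 0" unfolding wave_vel_def using h by simp
  then show "\<exists>y. (wave_pos d h has_real_derivative y) (at x) \<and> 0 < y"
    using wave_pos_has_derivative[OF h, of x d] sin_pos by auto
qed

lemma wave_acc_shift:
  assumes h: "h > 0"
  shows "wave_acc (d + real k * h) h t = wave_acc d h t"
proof -
  have "2 * pi * (t - (d + real k * h)) / h = 2 * pi * (t - d) / h - 2 * real k * pi"
    using h by (simp add: field_simps)
  then show ?thesis unfolding wave_acc_def by (simp add: sin_diff cos_diff)
qed

lemma xi_eq_wave_acc:
  assumes ab: "a < b" and t: "a \<le> t" "t \<le> b"
  shows "xi a b t = - wave_acc a (b - a) t"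
proof -
  define h where "h = b - a"
  have h: "h > 0" using ab by (simp add: h_def)
  define \<theta> where "\<theta> = 2 * pi * (t - a) / h"
  have "0 \<le> \<theta>" using t h by (simp add: \<theta>_def)
  have "pi * (2 * (t - a)) \<le> pi * (2 * h)" using t by (simp add: h_def)
  then have "\<theta> \<le> 2 * pi" using h by (simp add: \<theta>_def field_simps)
  show ?thesis
  proof (cases "t \<le> (a + b) / 2")
    case True
    have "pi * (2 * (t - a)) \<le> pi * h" using True by (simp add: h_def)
    then have "\<theta> \<le> pi" using h by (simp add: \<theta>_def field_simps)
    then have sin_nonneg: "sin \<theta> \<ge> 0" using \<open>0 \<le> \<theta>\<close> by (simp add: sin_ge_zero)
    have angle: "2 * pi * (t - a) / ((a + b) / 2 - a) = 2 * \<theta>"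
      using h by (simp add: \<theta>_def h_def field_simps)
    show ?thesis using True sin_nonneg
      unfolding xi_def phi_def wave_acc_def angle \<theta>_def[symmetric] h_def[symmetric] sin_double
      by (simp add: h_def field_simps)
  next
    case False
    have "pi * h \<le> pi * (2 * (t - a))" using False by (simp add: h_def)
    then have "pi \<le> \<theta>" using h by (simp add: \<theta>_def field_simps)
    then have sin_nonpos: "sin \<theta> \<le> 0"
      using sin_ge_zero[of "\<theta> - pi"] \<open>\<theta> \<le> 2 * pi\<close> by (simp add: sin_diff)
    have angle: "2 * pi * (t - (a + b) / 2) / (b - (a + b) / 2) = 2 * \<theta> - 2 * pi"
      using h by (simp add: \<theta>_def h_def field_simps)
    have sin_angle: "sin (2 * \<theta> - 2 * pi) = 2 * sin \<theta> * cos \<theta>" by (simp add: sin_diff sin_double)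
    show ?thesis using False sin_nonpos
      unfolding xi_def phi_def wave_acc_def angle \<theta>_def[symmetric] h_def[symmetric] sin_angle
      by (simp add: h_def field_simps)
  qed
qed

definition bump_acc :: "real \<Rightarrow> real \<Rightarrow> real \<Rightarrow> real" where
  "bump_acc a c t = c / 4 * sin (2 * pi * (t - a) / c)"

definition bump_vel :: "real \<Rightarrow> real \<Rightarrow> real \<Rightarrow> real" where
  "bump_vel a c t = c\<^sup>2 / (8 * pi) * (1 - cos (2 * pi * (t - a) / c))"

definition bump_pos :: "real \<Rightarrow> real \<Rightarrow> real \<Rightarrow> real" where
  "bump_pos a c t = c\<^sup>2 / (8 * pi) * ((t - a) - c / (2 * pi) * sin (2 * pi * (t - a) / c))"

lemma bump_vel_has_derivative: "c > 0 \<Longrightarrow> (bump_vel a c has_real_derivative bump_acc a c x) (at x)"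
  unfolding bump_vel_def[abs_def] bump_acc_def
  by (auto intro!: derivative_eq_intros simp: power2_eq_square field_simps)

lemma bump_pos_has_derivative: "c > 0 \<Longrightarrow> (bump_pos a c has_real_derivative bump_vel a c x) (at x)"
  unfolding bump_pos_def[abs_def] bump_vel_def
  by (auto intro!: derivative_eq_intros simp: power2_eq_square field_simps)

lemma bump_acc_has_integral:
  assumes "c > 0" "s \<le> t"
  shows "(bump_acc a c has_integral (bump_vel a c t - bump_vel a c s)) {s..t}"
  using assms(2)
  by (rule fundamental_theorem_of_calculus, unfold has_real_derivative_iff_has_vector_derivative[symmetric])
     (rule has_field_derivative_at_within[OF bump_vel_has_derivative[OF assms(1)]])

lemma bump_vel_has_integral:
  assumes "c > 0" "s \<le> t"
  shows "(bump_vel a c has_integral (bump_pos a c t - bump_pos a c s)) {s..t}"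
  using assms(2)
  by (rule fundamental_theorem_of_calculus, unfold has_real_derivative_iff_has_vector_derivative[symmetric])
     (rule has_field_derivative_at_within[OF bump_pos_has_derivative[OF assms(1)]])

lemma bump_vel_start: "bump_vel a c a = 0" and bump_pos_start: "bump_pos a c a = 0"
  by (simp_all add: bump_vel_def bump_pos_def)

lemma bump_vel_end: "c > 0 \<Longrightarrow> bump_vel a c (a + c) = 0"
  by (simp add: bump_vel_def)

lemma bump_pos_end: "c > 0 \<Longrightarrow> bump_pos a c (a + c) = c ^ 3 / (8 * pi)"
  by (simp add: bump_pos_def power2_eq_square power3_eq_cube)

lemma bump_pos_three_quarters:
  assumes c: "c > 0"
  shows "bump_pos a c (a + 3 * c / 4) = c ^ 3 / (8 * pi) * (3 / 4 + 1 / (2 * pi))"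
proof -
  have "2 * pi * (a + 3 * c / 4 - a) / c = pi + pi / 2" using c by (simp add: field_simps)
  moreover have "sin (pi + pi / 2) = -1" by (simp only: sin_add sin_pi cos_pi sin_pi_half cos_pi_half)
  ultimately show ?thesis using c by (simp add: bump_pos_def power2_eq_square power3_eq_cube field_simps)
qed

lemma bump_vel_pos:
  assumes c: "c > 0" and x: "a < x" "x < a + c"
  shows "bump_vel a c x > 0"
proof -
  have "cos (2 * pi * (x - a) / c) \<noteq> 1"
  proof
    assume "cos (2 * pi * (x - a) / c) = 1"
    then obtain k :: int where "2 * pi * (x - a) / c = of_int k * 2 * pi"
      by (auto simp: cos_one_2pi_int)
    then have "pi * (2 * (x - a)) = pi * (2 * (of_int k * c))" using c by (simp add: field_simps)
    then have "x - a = of_int k * c" by simp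
    then have "0 < of_int k * c" "of_int k * c < 1 * c" using x by linarith+
    then have "0 < k" "k < 1"
      using c mult_less_cancel_right2[of "real_of_int k" c] by (auto simp: zero_less_mult_iff)
    then show False by simp
  qed
  then have "cos (2 * pi * (x - a) / c) < 1" using cos_le_one[of "2 * pi * (x - a) / c"] by linarith
  then show ?thesis using c by (simp add: bump_vel_def)
qed

lemma bump_pos_strict_mono:
  assumes c: "c > 0" and st: "a \<le> s" "s < s'" "s' \<le> a + c"
  shows "bump_pos a c s < bump_pos a c s'"
proof (rule DERIV_pos_imp_increasing_open[OF st(2)])
  fix x assume "s < x" "x < s'"
  then show "\<exists>y. (bump_pos a c has_real_derivative y) (at x) \<and> 0 < y"
    using bump_pos_has_derivative[OF c] bump_vel_pos[OF c, of a x] st by auto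
qed (rule DERIV_continuous_on[OF has_field_derivative_at_within[OF bump_pos_has_derivative[OF c]]])

lemma bump_vel_nonneg: "c > 0 \<Longrightarrow> 0 \<le> bump_vel a c t"
  by (simp add: bump_vel_def)

lemma bump_vel_le: "c > 0 \<Longrightarrow> bump_vel a c t \<le> c\<^sup>2 / (4 * pi)"
proof -
  assume c: "c > 0"
  have "1 - cos (2 * pi * (t - a) / c) \<le> 2" using cos_ge_minus_one[of "2 * pi * (t - a) / c"] by linarith
  then have "c\<^sup>2 / (8 * pi) * (1 - cos (2 * pi * (t - a) / c)) \<le> c\<^sup>2 / (8 * pi) * 2"
    by (intro mult_left_mono) auto
  then show ?thesis by (simp add: bump_vel_def)
qed

section \<open>The time grid\<close>

definition decay :: "nat \<Rightarrow> real" where "decay n = exp (- real n)"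

lemma exp1_ge_2: "2 \<le> exp (1::real)" using exp_ge_add_one_self[of 1] by simp

lemma exp1_le_3: "exp (1::real) \<le> 3" by (rule exp_le)

lemma decay_pos: "decay n > 0" by (simp add: decay_def)

lemma decay_le_1: "decay n \<le> 1" by (simp add: decay_def)

lemma decay_pred: "n \<ge> 1 \<Longrightarrow> decay (n - 1) = decay n * exp 1"
  by (simp add: decay_def of_nat_diff exp_add[symmetric])

lemma decay_pred_Suc0: "Suc 0 \<le> n \<Longrightarrow> decay (n - Suc 0) = decay n * exp 1"
  using decay_pred by simp

lemma decay_mult_exp1_le: "m < n \<Longrightarrow> decay n * exp 1 \<le> decay m"
proof -
  assume "m < n"
  then have "- real m \<ge> 1 - real n" by simp
  then have "exp (1 - real n) \<le> exp (- real m)" by simp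
  then show ?thesis by (simp add: decay_def exp_add[symmetric])
qed

lemma decay_strict_antimono: "m < n \<Longrightarrow> decay n < decay m"
proof -
  assume "m < n"
  then have "decay n * exp 1 \<le> decay m" by (rule decay_mult_exp1_le)
  moreover have "decay n < decay n * exp 1" using decay_pos[of n] exp1_ge_2 by simp
  ultimately show ?thesis by linarith
qed

lemma decay_antimono: "m \<le> n \<Longrightarrow> decay n \<le> decay m"
  using decay_strict_antimono[of m n] by (cases "m = n") auto

lemma decay_less: "x > 0 \<Longrightarrow> \<exists>N. decay N < x"
proof -
  assume x: "x > 0"
  obtain N :: nat where N: "- ln x < real N" using reals_Archimedean2 by blast
  then have "exp (- real N) < exp (ln x)" by simp
  then show ?thesis using x by (auto simp: decay_def)
qed

lemma decay_eq_power: "decay n = exp (-1) ^ n"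
  using exp_of_nat_mult[of n "-1"] by (simp add: decay_def)

lemma decay_tendsto_0: "decay \<longlonglongrightarrow> 0"
  unfolding decay_eq_power[abs_def] by (rule LIMSEQ_power_zero) simp

lemma tt_eq_decay: "tt n = 1 - decay n" by (simp add: tt_def decay_def)

lemma tt_0: "tt 0 = 0" by (simp add: tt_def)

lemma ttp_0: "ttp 0 = 0" by (simp add: ttp_def tt_def)

lemma tt_nonneg: "tt n \<ge> 0" using decay_le_1 by (simp add: tt_eq_decay)

lemma tt_less_1: "tt n < 1" using decay_pos by (simp add: tt_eq_decay)

lemma tt_strict_mono: "m < n \<Longrightarrow> tt m < tt n"
  using decay_strict_antimono by (simp add: tt_eq_decay)

lemma tt_mono: "m \<le> n \<Longrightarrow> tt m \<le> tt n"
  using decay_antimono by (simp add: tt_eq_decay)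

lemma tt_tendsto_1: "tt \<longlonglongrightarrow> 1"
  unfolding tt_eq_decay[abs_def] using tendsto_diff[OF tendsto_const decay_tendsto_0, of 1] by simp

lemma ttm_eq_decay: "n \<ge> 1 \<Longrightarrow> ttm n = 1 - decay n * (exp 1 + 4) / 5"
  by (simp add: ttm_def tt_eq_decay decay_pred decay_pred_Suc0 field_simps)

lemma ttp_eq_decay: "n \<ge> 1 \<Longrightarrow> ttp n = 1 - decay n * (6 - exp 1) / 5"
  by (simp add: ttp_def tt_eq_decay decay_pred decay_pred_Suc0 field_simps)

text \<open>In the \<open>n\<close>-th segment \<open>[t\<^sub>n\<^sub>-\<^sub>1, t\<^sub>n]\<close>: \<open>bump_end n = d\<^sub>0\<close>, \<open>bump_len n = c\<^sub>n = d\<^sub>0 - t\<^sub>n\<^sub>-\<^sub>1\<close>,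
  \<open>wiggle_len n = d\<^sub>i - d\<^sub>i\<^sub>-\<^sub>1\<close>, \<open>cut_pt n = q\<^sub>n\<close>, and \<open>window_len n = t\<^sub>n\<^sup>+ - t\<^sub>n\<^sup>-\<close>.\<close>
definition bump_end :: "nat \<Rightarrow> real" where "bump_end n = dpt (tt (n - 1)) (tt n) n 0"

definition bump_len :: "nat \<Rightarrow> real" where "bump_len n = bump_end n - tt (n - 1)"

definition wiggle_len :: "nat \<Rightarrow> real" where "wiggle_len n = (tt n - tt (n - 1)) / (6 * real n)"

definition cut_pt :: "nat \<Rightarrow> real" where "cut_pt n = tt (n - 1) + 3 * bump_len n / 4"

definition window_len :: "nat \<Rightarrow> real" where "window_len n = ttp n - ttm n"

lemma bump_end_eq_decay: "n \<ge> 1 \<Longrightarrow> bump_end n = 1 - decay n * (exp 1 + 5) / 6"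
  by (simp add: bump_end_def dpt_def tt_eq_decay decay_pred decay_pred_Suc0 field_simps)

lemma bump_len_eq_decay: "n \<ge> 1 \<Longrightarrow> bump_len n = 5 * decay n * (exp 1 - 1) / 6"
  by (simp add: bump_len_def bump_end_eq_decay tt_eq_decay decay_pred decay_pred_Suc0 field_simps)

lemma cut_pt_eq_decay: "n \<ge> 1 \<Longrightarrow> cut_pt n = 1 - decay n * (3 * exp 1 + 5) / 8"
  by (simp add: cut_pt_def bump_len_eq_decay tt_eq_decay decay_pred decay_pred_Suc0 field_simps)

lemma window_len_eq_decay: "n \<ge> 1 \<Longrightarrow> window_len n = 2 * decay n * (exp 1 - 1) / 5"
  by (simp add: window_len_def ttp_eq_decay ttm_eq_decay field_simps)

lemma wiggle_len_eq_decay: "n \<ge> 1 \<Longrightarrow> wiggle_len n = decay n * (exp 1 - 1) / (6 * real n)"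
  by (simp add: wiggle_len_def tt_eq_decay decay_pred decay_pred_Suc0 field_simps)

lemma bump_len_pos: "n \<ge> 1 \<Longrightarrow> bump_len n > 0"
  using decay_pos[of n] exp1_ge_2 by (simp add: bump_len_eq_decay)

lemma wiggle_len_pos: "n \<ge> 1 \<Longrightarrow> wiggle_len n > 0"
  using decay_pos[of n] exp1_ge_2 by (simp add: wiggle_len_eq_decay)

lemma window_len_pos: "n \<ge> 1 \<Longrightarrow> window_len n > 0"
  using decay_pos[of n] exp1_ge_2 by (simp add: window_len_eq_decay)

lemma bump_end_eq: "bump_end n = tt (n - 1) + bump_len n" by (simp add: bump_len_def)

lemma grid_order:
  assumes "n \<ge> 1"
  shows "tt (n - 1) < cut_pt n" "cut_pt n < ttm n" "ttm n < bump_end n" "bump_end n < tt n" "tt n < ttp n"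
    "ttp (n - 1) < cut_pt n"
proof -
  have decay: "decay n > 0" by (rule decay_pos)
  note e = exp1_ge_2 exp1_le_3
  show "tt (n - 1) < cut_pt n" using decay e assms by (simp add: tt_eq_decay decay_pred_Suc0 cut_pt_eq_decay field_simps)
  show "cut_pt n < ttm n" using decay e assms by (simp add: ttm_eq_decay cut_pt_eq_decay field_simps)
  show "ttm n < bump_end n" using decay e assms by (simp add: ttm_eq_decay bump_end_eq_decay field_simps)
  show "bump_end n < tt n" using decay e assms by (simp add: tt_eq_decay bump_end_eq_decay field_simps)
  show "tt n < ttp n" using decay e assms by (simp add: tt_eq_decay ttp_eq_decay field_simps)
  show "ttp (n - 1) < cut_pt n"
  proof (cases "n = 1")
    case True
    have "decay 1 * exp 1 = 1" by (simp add: decay_def exp_minus)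
    moreover have "decay 1 < decay 0" by (rule decay_strict_antimono) simp
    moreover have "decay 0 = 1" by (simp add: decay_def)
    ultimately have "decay 1 * (3 * exp 1 + 5) < 8" by (simp only: distrib_left)
    then show ?thesis using True decay e by (simp add: ttp_0 cut_pt_eq_decay field_simps)
  next
    case False
    then have n2: "n - 1 \<ge> 1" using assms by simp
    have "(8 * exp 1 - 25) * (exp 1 - 1) < (0::real)"
      using e by (intro mult_neg_pos) auto
    then have "(3 * exp 1 + 5) / 8 < exp 1 * (6 - exp 1) / (5::real)"
      by (simp add: field_simps algebra_simps)
    then have "decay n * ((3 * exp 1 + 5) / 8) < decay n * (exp 1 * (6 - exp 1) / 5)"
      using decay by (rule mult_strict_left_mono)
    then show ?thesis using assms n2
      by (simp add: ttp_eq_decay cut_pt_eq_decay decay_pred decay_pred_Suc0 field_simps)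
  qed
qed

lemma ttp_less_ttm: "m < n \<Longrightarrow> n \<ge> 1 \<Longrightarrow> ttp m < ttm n"
proof (cases "m = 0")
  case True
  assume "n \<ge> 1"
  have a: "decay n * exp 1 \<le> 1" using decay_mult_exp1_le[of 0 n] \<open>n \<ge> 1\<close> by (simp add: decay_def)
  have b: "decay n * 2 \<le> decay n * exp 1" using exp1_ge_2 decay_pos[of n] by simp
  have "decay n * (exp 1 + 4) < 5" using a b decay_pos[of n] by (simp only: distrib_left)
  then show ?thesis using True \<open>n \<ge> 1\<close> by (simp add: ttp_0 ttm_eq_decay field_simps)
next
  case False
  assume mn: "m < n" "n \<ge> 1"
  have em: "decay n * exp 1 \<le> decay m" by (rule decay_mult_exp1_le[OF mn(1)])
  have "0 < (exp 1 - 1) * (4 - exp (1::real))"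
    using exp1_ge_2 exp1_le_3 by (intro mult_pos_pos) auto
  then have "exp 1 + 4 < exp 1 * (6 - exp (1::real))"
    by (simp add: algebra_simps)
  then have "decay n * (exp 1 + 4) < decay n * (exp 1 * (6 - exp 1))"
    using decay_pos by (rule mult_strict_left_mono)
  also have "\<dots> = (decay n * exp 1) * (6 - exp 1)" by simp
  also have "\<dots> \<le> decay m * (6 - exp 1)" using em exp1_le_3 by (intro mult_right_mono) auto
  finally show ?thesis using False mn by (simp add: ttp_eq_decay ttm_eq_decay field_simps)
qed

lemma ttm_less_ttp: "n \<ge> 1 \<Longrightarrow> ttm n < ttp n"
  using grid_order[of n] by linarith

lemma ttm_mono: "1 \<le> m \<Longrightarrow> m \<le> n \<Longrightarrow> ttm m \<le> ttm n"
  using decay_antimono[of m n] exp1_ge_2 by (simp add: ttm_eq_decay divide_right_mono mult_right_mono)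

lemma ttp_mono: "m \<le> n \<Longrightarrow> ttp m \<le> ttp n"
proof (cases "m = 0")
  case True
  assume "m \<le> n"
  show ?thesis
  proof (cases "n = 0")
    case False
    then have "decay n * (6 - exp 1) \<le> 1 * 5" using decay_le_1[of n] exp1_ge_2 exp1_le_3 decay_pos[of n]
      by (intro mult_mono) auto
    then show ?thesis using True False by (simp add: ttp_0 ttp_eq_decay)
  qed (use True in simp)
next
  case False
  assume "m \<le> n"
  then show ?thesis using False decay_antimono[of m n] exp1_le_3
    by (simp add: ttp_eq_decay divide_right_mono mult_right_mono)
qed

lemma ttp_nonneg: "ttp n \<ge> 0" using ttp_mono[of 0 n] by (simp add: ttp_0)

lemma ttp_less_1: "n \<ge> 1 \<Longrightarrow> ttp n < 1"
  using decay_pos[of n] exp1_le_3 by (simp add: ttp_eq_decay)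

lemma ttp_Suc_tendsto_1: "(\<lambda>n. ttp (Suc n)) \<longlonglongrightarrow> 1"
proof -
  have "(\<lambda>n. 1 - decay (Suc n) * (6 - exp 1) / 5) \<longlonglongrightarrow> 1 - 0 * (6 - exp 1) / 5"
    by (intro tendsto_intros LIMSEQ_Suc[OF decay_tendsto_0]) auto
  moreover have eq: "\<And>n. ttp (Suc n) = 1 - decay (Suc n) * (6 - exp 1) / 5" by (rule ttp_eq_decay) simp
  ultimately show ?thesis by simp
qed

lemma bump_end_add_wiggles: "n \<ge> 1 \<Longrightarrow> bump_end n + real n * wiggle_len n = tt n"
  by (simp add: bump_end_eq_decay wiggle_len_eq_decay tt_eq_decay field_simps)

lemma ttm_add_half_window: "n \<ge> 1 \<Longrightarrow> ttm n + window_len n / 2 = tt n"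
  by (simp add: ttm_eq_decay window_len_eq_decay tt_eq_decay field_simps)

lemma cut_pt_less_tt: "n \<ge> 1 \<Longrightarrow> cut_pt n < tt n" using grid_order[of n] by linarith

lemma tt_exceeds: "t < 1 \<Longrightarrow> \<exists>N. t < tt N"
proof -
  assume "t < 1"
  then obtain N where "decay N < 1 - t" using decay_less[of "1 - t"] by auto
  then have "t < tt N" by (simp add: tt_eq_decay)
  then show ?thesis ..
qed

lemma nat_threshold_exists:
  fixes P :: "nat \<Rightarrow> bool"
  assumes "P N" "\<not> P 0"
  shows "\<exists>n\<ge>1. \<not> P (n - 1) \<and> P n"
proof -
  obtain k where "\<not> P k" "P (Suc k)" using ex_least_nat_less[OF assms] by blast
  then show ?thesis by (intro exI[of _ "Suc k"]) auto
qed

lemma tt_segment_exists: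
  assumes "0 \<le> t" "t < 1"
  shows "\<exists>n\<ge>1. tt (n - 1) \<le> t \<and> t < tt n"
proof -
  obtain N where "t < tt N" using tt_exceeds assms by blast
  then show ?thesis
    using nat_threshold_exists[of "\<lambda>n. t < tt n" N] assms by (auto simp: tt_0 not_less)
qed

lemma tt_segment_exists_left_open:
  assumes "0 < t" "t < 1"
  shows "\<exists>n\<ge>1. tt (n - 1) < t \<and> t \<le> tt n"
proof -
  obtain N where "t < tt N" using tt_exceeds assms by blast
  then show ?thesis
    using nat_threshold_exists[of "\<lambda>n. t \<le> tt n" N] assms by (auto simp: tt_0 not_le)
qed

lemma ttp_segment_exists:
  assumes "0 \<le> t" "t < 1"
  shows "\<exists>n\<ge>1. ttp (n - 1) \<le> t \<and> t < ttp n"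
proof -
  obtain N where "t < tt (Suc N)"
    using tt_exceeds assms tt_mono[of _ "Suc _"] by (meson le_SucI order_less_le_trans order_refl)
  then have "t < ttp (Suc N)" using grid_order(5)[of "Suc N"] by simp
  then show ?thesis
    using nat_threshold_exists[of "\<lambda>n. t < ttp n" "Suc N"] assms by (auto simp: ttp_0 not_less)
qed

lemma Least_tt_segment:
  assumes n: "n \<ge> 1" and t: "tt (n - 1) < t" "t \<le> tt n"
  shows "(LEAST k. t \<le> tt k) = n"
proof (rule Least_equality)
  show "t \<le> tt n" by (rule t(2))
next
  fix k assume k: "t \<le> tt k"
  show "n \<le> k"
  proof (rule ccontr)
    assume "\<not> n \<le> k" then have "k \<le> n - 1" by simp
    then have "tt k \<le> tt (n - 1)" by (rule tt_mono)
    then show False using k t by linarith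
  qed
qed

lemma psi_on_bump: "t \<le> dpt a b n 0 \<Longrightarrow> psi a b n t = bump_acc a (dpt a b n 0 - a) t"
  by (simp add: psi_def phi_def bump_acc_def)

lemma psi_on_wiggles:
  assumes n: "n \<ge> 1" and ab: "a < b" and t: "dpt a b n 0 < t" "t \<le> b"
  shows "psi a b n t = - wave_acc (dpt a b n 0) ((b - a) / (6 * real n)) t"
proof -
  define d where "d = dpt a b n 0"
  define h where "h = (b - a) / (6 * real n)"
  have h: "h > 0" using n ab by (simp add: h_def)
  define u where "u = (t - d) * (6 * real n) / (b - a)"
  have u: "u = (t - d) / h" using n ab by (simp add: u_def h_def field_simps)
  have u0: "0 < u" using t h by (simp add: u d_def)
  define i where "i = nat \<lceil>u\<rceil>"
  have ci: "\<lceil>u\<rceil> \<ge> 1" using u0 by (simp add: le_ceiling_iff)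
  then have ri: "real i = of_int \<lceil>u\<rceil>" by (simp add: i_def)
  have "real i \<ge> 1" using ri ci by simp
  then have i1: "i \<ge> 1" by simp
  have iu: "real i - 1 < u" "u \<le> real i" using ri ceiling_correct[of u] by linarith+
  have dpti: "\<And>j. dpt a b n j = d + real j * h" unfolding d_def h_def dpt_def by simp
  have ri1: "real (i - 1) = real i - 1" using i1 by (simp add: of_nat_diff)
  have t_eq: "t = d + u * h" using h by (simp add: u field_simps)
  have lo: "dpt a b n (i - 1) \<le> t" unfolding dpti ri1 t_eq
    using iu h by (simp add: mult_right_mono)
  have hi: "t \<le> dpt a b n i" unfolding dpti t_eq using iu h by (simp add: mult_right_mono)
  have lt: "dpt a b n (i - 1) < dpt a b n i" unfolding dpti ri1 using h by simp
  have diff: "dpt a b n i - dpt a b n (i - 1) = h" unfolding dpti ri1 by (simp add: algebra_simps)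
  have "psi a b n t = xi (dpt a b n (i - 1)) (dpt a b n i) t"
    using t unfolding psi_def Let_def d_def[symmetric] u_def[symmetric] i_def[symmetric]
    by simp
  also have "\<dots> = - wave_acc (dpt a b n (i - 1)) h t"
    using xi_eq_wave_acc[OF lt lo hi] diff by simp
  also have "\<dots> = - wave_acc d h t" unfolding dpti using wave_acc_shift[OF h] by simp
  finally show ?thesis by (simp add: d_def h_def)
qed

lemma acc_y_eq_psi:
  assumes n: "n \<ge> 1" and t: "tt (n - 1) \<le> t" "t < tt n"
  shows "acc_y t = psi (tt (n - 1)) (tt n) n t"
proof -
  have t01: "0 \<le> t" "t < 1" using t tt_nonneg[of "n - 1"] tt_less_1[of n] by linarith+
  have the: "(THE m. m \<ge> 1 \<and> tt (m - 1) \<le> t \<and> t < tt m) = n"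
  proof (rule the_equality)
    show "n \<ge> 1 \<and> tt (n - 1) \<le> t \<and> t < tt n" using n t by simp
  next
    fix m assume m: "m \<ge> 1 \<and> tt (m - 1) \<le> t \<and> t < tt m"
    show "m = n"
    proof (rule ccontr)
      assume "m \<noteq> n"
      then have "m \<le> n - 1 \<or> n \<le> m - 1" by linarith
      then show False
      proof
        assume "m \<le> n - 1" then have "tt m \<le> tt (n - 1)" by (rule tt_mono)
        then show False using m t by linarith
      next
        assume "n \<le> m - 1" then have "tt n \<le> tt (m - 1)" by (rule tt_mono)
        then show False using m t by linarith
      qed
    qed
  qed
  show ?thesis using t01 unfolding acc_y_def the by simp
qed

lemma acc_y_on_bump:
  assumes n: "n \<ge> 1" and x: "tt (n - 1) \<le> x" "x \<le> bump_end n"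
  shows "acc_y x = bump_acc (tt (n - 1)) (bump_len n) x"
proof -
  have "x < tt n" using x grid_order[OF n] by linarith
  then have "acc_y x = psi (tt (n - 1)) (tt n) n x" using acc_y_eq_psi[OF n] x by simp
  also have "\<dots> = bump_acc (tt (n - 1)) (bump_len n) x" using psi_on_bump x by (simp add: bump_end_def bump_len_def)
  finally show ?thesis .
qed

lemma acc_y_on_wiggles:
  assumes n: "n \<ge> 1" and x: "bump_end n < x" "x < tt n"
  shows "acc_y x = - wave_acc (bump_end n) (wiggle_len n) x"
proof -
  have "tt (n - 1) \<le> x" using x grid_order[OF n] by linarith
  then have "acc_y x = psi (tt (n - 1)) (tt n) n x" using acc_y_eq_psi[OF n] x by simp
  also have "\<dots> = - wave_acc (bump_end n) (wiggle_len n) x"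
    using psi_on_wiggles[OF n] x grid_order[OF n] tt_strict_mono[of "n - 1" n] n
    by (simp add: bump_end_def wiggle_len_def)
  finally show ?thesis .
qed

lemma acc_x_off_windows:
  assumes n: "n \<ge> 1" and t: "ttp (n - 1) \<le> t" "t < ttm n"
  shows "acc_x tau t = 0"
proof -
  have nex: "\<not> (\<exists>m\<ge>1. ttm m \<le> t \<and> t < ttp m)"
  proof
    assume "\<exists>m\<ge>1. ttm m \<le> t \<and> t < ttp m"
    then obtain m where m: "m \<ge> 1" "ttm m \<le> t" "t < ttp m" by blast
    show False
    proof (cases "n \<le> m")
      case True then show ?thesis using ttm_mono[OF n True] m t by linarith
    next
      case False then have "m \<le> n - 1" by simp
      then show ?thesis using ttp_mono[of m "n - 1"] m t by linarith
    qed
  qed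
  show ?thesis by (simp only: acc_x_def if_not_P[OF nex])
qed

lemma acc_x_on_window:
  assumes n: "n \<ge> 1" and t: "ttm n \<le> t" "t < ttp n"
  shows "acc_x tau t = wt tau n * wave_acc (ttm n) (window_len n) t"
proof -
  have the: "(THE m. m \<ge> 1 \<and> ttm m \<le> t \<and> t < ttp m) = n"
  proof (rule the_equality)
    show "n \<ge> 1 \<and> ttm n \<le> t \<and> t < ttp n" using n t by simp
  next
    fix m assume m: "m \<ge> 1 \<and> ttm m \<le> t \<and> t < ttp m"
    show "m = n"
    proof (rule ccontr)
      assume "m \<noteq> n"
      then have "m < n \<or> n < m" by linarith
      then show False
      proof
        assume "m < n" then show False using ttp_less_ttm[of m n] n m t by linarith
      next
        assume "n < m" then show False using ttp_less_ttm[of n m] n m t by linarith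
      qed
    qed
  qed
  have ex: "\<exists>m\<ge>1. ttm m \<le> t \<and> t < ttp m" using n t by blast
  have "xi (ttm n) (ttp n) t = - wave_acc (ttm n) (window_len n) t"
    using xi_eq_wave_acc[OF ttm_less_ttp[OF n]] t by (simp add: window_len_def)
  then show ?thesis unfolding acc_x_def Let_def the using ex by simp
qed

section \<open>Integrating the motion\<close>

definition vel_y_seg :: "nat \<Rightarrow> real \<Rightarrow> real" where
  "vel_y_seg n t = (if t \<le> bump_end n then bump_vel (tt (n - 1)) (bump_len n) t
     else - wave_vel (bump_end n) (wiggle_len n) t)"

definition pos_y_seg :: "nat \<Rightarrow> real \<Rightarrow> real" where
  "pos_y_seg n t = (if t \<le> bump_end n then bump_pos (tt (n - 1)) (bump_len n) t
     else bump_len n ^ 3 / (8 * pi) - wave_pos (bump_end n) (wiggle_len n) t)"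

definition y_level :: "nat \<Rightarrow> real" where
  "y_level n = (\<Sum>k\<in>{1..n}. bump_len k ^ 3 / (8 * pi))"

lemma acc_y_has_integral_seg:
  assumes n: "n \<ge> 1" and t: "tt (n - 1) \<le> t" "t \<le> tt n"
  shows "(acc_y has_integral vel_y_seg n t) {tt (n - 1)..t}"
proof -
  define a where "a = tt (n - 1)"
  have c: "bump_len n > 0" using bump_len_pos[OF n] .
  have h: "wiggle_len n > 0" using wiggle_len_pos[OF n] .
  have end_eq: "bump_end n = a + bump_len n" by (simp add: a_def bump_end_eq)
  show ?thesis
  proof (cases "t \<le> bump_end n")
    case True
    have "(bump_acc a (bump_len n) has_integral (bump_vel a (bump_len n) t - bump_vel a (bump_len n) a)) {a..t}"
      by (rule bump_acc_has_integral[OF c]) (use t in \<open>simp add: a_def\<close>)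
    then have "(bump_acc a (bump_len n) has_integral vel_y_seg n t) {a..t}"
      using True by (simp add: bump_vel_start vel_y_seg_def a_def)
    then show ?thesis unfolding a_def
      by (rule has_integral_eq[rotated]) (use acc_y_on_bump[OF n] True in \<open>auto simp: a_def\<close>)
  next
    case False
    have bump_le: "a \<le> bump_end n" using grid_order[OF n] by (simp add: a_def)
    have end_le: "bump_end n \<le> t" using False by simp
    have "(bump_acc a (bump_len n) has_integral 0) {a..bump_end n}"
      using bump_acc_has_integral[OF c bump_le, of a] by (simp add: bump_vel_start end_eq bump_vel_end[OF c])
    then have bump: "(acc_y has_integral 0) {a..bump_end n}"
      by (rule has_integral_eq[rotated]) (auto simp: a_def acc_y_on_bump[OF n])
    have "((\<lambda>x. - wave_acc (bump_end n) (wiggle_len n) x) has_integral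
        - wave_vel (bump_end n) (wiggle_len n) t) {bump_end n..t}"
      using has_integral_neg[OF wave_acc_has_integral[OF h end_le, of "bump_end n"]]
      by (simp add: wave_vel_start)
    then have wiggles: "(acc_y has_integral - wave_vel (bump_end n) (wiggle_len n) t) {bump_end n..t}"
      by (rule has_integral_spike_finite[where S="{bump_end n, t}", rotated 2])
         (use t acc_y_on_wiggles[OF n] in auto)
    have "(acc_y has_integral (0 + - wave_vel (bump_end n) (wiggle_len n) t)) {a..t}"
      by (rule has_integral_combine[OF bump_le end_le bump wiggles])
    then show ?thesis using False by (simp add: vel_y_seg_def a_def)
  qed
qed

lemma vel_y_seg_end: "n \<ge> 1 \<Longrightarrow> vel_y_seg n (tt n) = 0"
  using grid_order[of n] wave_vel_period[OF wiggle_len_pos, of n "bump_end n" n] bump_end_add_wiggles[of n]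
  by (simp add: vel_y_seg_def)

lemma acc_y_has_integral_upto_tt: "(acc_y has_integral 0) {0..tt n}"
proof (induction n)
  case 0
  show ?case by (simp add: tt_0 has_integral_refl(2))
next
  case (Suc n)
  have "(acc_y has_integral (0 + vel_y_seg (Suc n) (tt (Suc n)))) {0..tt (Suc n)}"
    by (rule has_integral_combine[OF tt_nonneg tt_mono[of n "Suc n"]])
       (use Suc.IH acc_y_has_integral_seg[of "Suc n" "tt (Suc n)"] tt_mono[of n "Suc n"] in auto)
  then show ?case using vel_y_seg_end[of "Suc n"] by simp
qed

lemma vel_y_eq_seg:
  assumes n: "n \<ge> 1" and t: "tt (n - 1) \<le> t" "t \<le> tt n"
  shows "vel_y t = vel_y_seg n t"
proof -
  have "(acc_y has_integral (0 + vel_y_seg n t)) {0..t}"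
    by (rule has_integral_combine[OF tt_nonneg t(1) acc_y_has_integral_upto_tt acc_y_has_integral_seg[OF n t]])
  then show ?thesis unfolding vel_y_def using integral_unique by auto
qed

lemma vel_y_has_integral_seg:
  assumes n: "n \<ge> 1" and t: "tt (n - 1) \<le> t" "t \<le> tt n"
  shows "(vel_y has_integral pos_y_seg n t) {tt (n - 1)..t}"
proof -
  note V = vel_y_eq_seg[OF n]
  define a where "a = tt (n - 1)"
  have c: "bump_len n > 0" using bump_len_pos[OF n] .
  have h: "wiggle_len n > 0" using wiggle_len_pos[OF n] .
  have end_eq: "bump_end n = a + bump_len n" by (simp add: a_def bump_end_eq)
  have dn: "bump_end n < tt n" using grid_order[OF n] by simp
  show ?thesis
  proof (cases "t \<le> bump_end n")
    case True
    have "(bump_vel a (bump_len n) has_integral (bump_pos a (bump_len n) t - bump_pos a (bump_len n) a)) {a..t}"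
      by (rule bump_vel_has_integral[OF c]) (use t in \<open>simp add: a_def\<close>)
    then have "(bump_vel a (bump_len n) has_integral pos_y_seg n t) {a..t}"
      using True by (simp add: bump_pos_start pos_y_seg_def a_def)
    then show ?thesis unfolding a_def
      by (rule has_integral_eq[rotated]) (use V True dn in \<open>auto simp: a_def vel_y_seg_def\<close>)
  next
    case False
    have bump_le: "a \<le> bump_end n" using grid_order[OF n] by (simp add: a_def)
    have end_le: "bump_end n \<le> t" using False by simp
    have "(bump_vel a (bump_len n) has_integral bump_len n ^ 3 / (8 * pi)) {a..bump_end n}"
      using bump_vel_has_integral[OF c bump_le, of a] by (simp add: bump_pos_start end_eq bump_pos_end[OF c])
    then have bump: "(vel_y has_integral bump_len n ^ 3 / (8 * pi)) {a..bump_end n}"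
      by (rule has_integral_eq[rotated]) (use V dn in \<open>auto simp: a_def vel_y_seg_def\<close>)
    have "((\<lambda>x. - wave_vel (bump_end n) (wiggle_len n) x) has_integral
        - wave_pos (bump_end n) (wiggle_len n) t) {bump_end n..t}"
      using has_integral_neg[OF wave_vel_has_integral[OF h end_le, of "bump_end n"]]
      by (simp add: wave_pos_start)
    then have wiggles: "(vel_y has_integral - wave_pos (bump_end n) (wiggle_len n) t) {bump_end n..t}"
      by (rule has_integral_spike_finite[where S="{bump_end n}", rotated 2])
         (use t V bump_le in \<open>auto simp: vel_y_seg_def a_def\<close>)
    have "(vel_y has_integral (bump_len n ^ 3 / (8 * pi) + - wave_pos (bump_end n) (wiggle_len n) t)) {a..t}"
      by (rule has_integral_combine[OF bump_le end_le bump wiggles])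
    then show ?thesis using False by (simp add: pos_y_seg_def a_def)
  qed
qed

lemma pos_y_seg_end: "n \<ge> 1 \<Longrightarrow> pos_y_seg n (tt n) = bump_len n ^ 3 / (8 * pi)"
  using grid_order[of n] wave_pos_period[OF wiggle_len_pos, of n "bump_end n" n] bump_end_add_wiggles[of n]
  by (simp add: pos_y_seg_def)

lemma y_level_Suc: "n \<ge> 1 \<Longrightarrow> y_level n = y_level (n - 1) + bump_len n ^ 3 / (8 * pi)"
  by (cases n) (auto simp: y_level_def)

lemma vel_y_has_integral_upto_tt: "(vel_y has_integral y_level n) {0..tt n}"
proof (induction n)
  case 0
  show ?case by (simp add: tt_0 y_level_def has_integral_refl(2))
next
  case (Suc n)
  have "(vel_y has_integral (y_level n + pos_y_seg (Suc n) (tt (Suc n)))) {0..tt (Suc n)}"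
    by (rule has_integral_combine[OF tt_nonneg tt_mono[of n "Suc n"]])
       (use Suc.IH vel_y_has_integral_seg[of "Suc n" "tt (Suc n)"] tt_mono[of n "Suc n"] in auto)
  then show ?case using pos_y_seg_end[of "Suc n"] y_level_Suc[of "Suc n"] by simp
qed

lemma pos_y_eq_seg:
  assumes n: "n \<ge> 1" and t: "tt (n - 1) \<le> t" "t \<le> tt n"
  shows "pos_y t = y_level (n - 1) + pos_y_seg n t"
proof -
  have "(vel_y has_integral (y_level (n - 1) + pos_y_seg n t)) {0..t}"
    by (rule has_integral_combine[OF tt_nonneg t(1)])
       (use vel_y_has_integral_upto_tt[of "n - 1"] vel_y_has_integral_seg[OF n t] in auto)
  then show ?thesis unfolding pos_y_def using integral_unique by auto
qed

lemma pos_y_tt: "pos_y (tt n) = y_level n"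
  unfolding pos_y_def using vel_y_has_integral_upto_tt integral_unique by blast

definition vel_x_win :: "(nat \<Rightarrow> enat) \<Rightarrow> nat \<Rightarrow> real \<Rightarrow> real" where
  "vel_x_win tau n t = wt tau n * wave_vel (ttm n) (window_len n) t"

definition pos_x_win :: "(nat \<Rightarrow> enat) \<Rightarrow> nat \<Rightarrow> real \<Rightarrow> real" where
  "pos_x_win tau n t = wt tau n * wave_pos (ttm n) (window_len n) t"

lemma vel_x_win_end: "n \<ge> 1 \<Longrightarrow> vel_x_win tau n (ttp n) = 0"
  using wave_vel_period[OF window_len_pos, of n "ttm n" 1] by (simp add: vel_x_win_def window_len_def)

lemma pos_x_win_end: "n \<ge> 1 \<Longrightarrow> pos_x_win tau n (ttp n) = 0"
  using wave_pos_period[OF window_len_pos, of n "ttm n" 1] by (simp add: pos_x_win_def window_len_def)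

lemma ttp_pred_le_ttm: "n \<ge> 1 \<Longrightarrow> ttp (n - 1) \<le> ttm n"
  using ttp_less_ttm[of "n - 1" n] by simp

lemma acc_x_has_integral_gap:
  assumes n: "n \<ge> 1" and t: "ttp (n - 1) \<le> t" "t \<le> ttm n"
  shows "(acc_x tau has_integral 0) {ttp (n - 1)..t}"
  by (rule has_integral_spike_finite[where S="{t}" and f="\<lambda>x. 0"]) (use acc_x_off_windows[OF n] t in auto)

lemma acc_x_has_integral_window:
  assumes n: "n \<ge> 1" and t: "ttm n \<le> t" "t \<le> ttp n"
  shows "(acc_x tau has_integral vel_x_win tau n t) {ttm n..t}"
proof -
  have "(wave_acc (ttm n) (window_len n) has_integral
      (wave_vel (ttm n) (window_len n) t - wave_vel (ttm n) (window_len n) (ttm n))) {ttm n..t}"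
    by (rule wave_acc_has_integral[OF window_len_pos[OF n] t(1)])
  from has_integral_mult_right[OF this, of "wt tau n"]
  have "((\<lambda>x. wt tau n * wave_acc (ttm n) (window_len n) x) has_integral vel_x_win tau n t) {ttm n..t}"
    by (simp add: wave_vel_start vel_x_win_def)
  then show ?thesis
    by (rule has_integral_spike_finite[where S="{t}", rotated 2]) (use acc_x_on_window[OF n] t in auto)
qed

lemma acc_x_has_integral_upto_ttp: "(acc_x tau has_integral 0) {0..ttp n}"
proof (induction n)
  case 0
  show ?case by (simp add: ttp_0 has_integral_refl(2))
next
  case (Suc n)
  have m: "Suc n \<ge> 1" by simp
  have gap: "ttp n \<le> ttm (Suc n)" using ttp_pred_le_ttm[OF m] by simp
  have win: "ttm (Suc n) \<le> ttp (Suc n)" using ttm_less_ttp[OF m] by simp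
  have "(acc_x tau has_integral (0 + 0)) {0..ttm (Suc n)}"
    by (rule has_integral_combine[OF ttp_nonneg gap Suc.IH])
       (use acc_x_has_integral_gap[OF m, of "ttm (Suc n)" tau] gap in simp)
  then have "(acc_x tau has_integral (0 + vel_x_win tau (Suc n) (ttp (Suc n)))) {0..ttp (Suc n)}"
    by (intro has_integral_combine[OF _ win _ acc_x_has_integral_window[OF m win order_refl]])
       (use gap ttp_nonneg[of n] in auto)
  then show ?case using vel_x_win_end[OF m] by simp
qed

lemma acc_x_has_integral_upto_ttm:
  assumes n: "n \<ge> 1"
  shows "(acc_x tau has_integral 0) {0..ttm n}"
  using has_integral_combine[OF ttp_nonneg ttp_pred_le_ttm[OF n] acc_x_has_integral_upto_ttp
      acc_x_has_integral_gap[OF n ttp_pred_le_ttm[OF n] order_refl]]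
  by simp

lemma vel_x_on_gap:
  assumes n: "n \<ge> 1" and t: "ttp (n - 1) \<le> t" "t \<le> ttm n"
  shows "vel_x tau t = 0"
proof -
  have "(acc_x tau has_integral (0 + 0)) {0..t}"
    by (rule has_integral_combine[OF ttp_nonneg t(1) acc_x_has_integral_upto_ttp
          acc_x_has_integral_gap[OF n t]])
  then show ?thesis unfolding vel_x_def using integral_unique by auto
qed

lemma vel_x_on_window:
  assumes n: "n \<ge> 1" and t: "ttm n \<le> t" "t \<le> ttp n"
  shows "vel_x tau t = vel_x_win tau n t"
proof -
  have "(acc_x tau has_integral (0 + vel_x_win tau n t)) {0..t}"
    using has_integral_combine[OF _ t(1) acc_x_has_integral_upto_ttm[OF n] acc_x_has_integral_window[OF n t]]
      ttp_pred_le_ttm[OF n] ttp_nonneg[of "n - 1"] by simp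
  then show ?thesis unfolding vel_x_def using integral_unique by auto
qed

lemma vel_x_has_integral_gap:
  assumes n: "n \<ge> 1" and t: "ttp (n - 1) \<le> t" "t \<le> ttm n"
  shows "(vel_x tau has_integral 0) {ttp (n - 1)..t}"
  by (rule has_integral_eq[where f="\<lambda>x. 0"]) (use vel_x_on_gap[OF n] t in auto)

lemma vel_x_has_integral_window:
  assumes n: "n \<ge> 1" and t: "ttm n \<le> t" "t \<le> ttp n"
  shows "(vel_x tau has_integral pos_x_win tau n t) {ttm n..t}"
proof -
  have "(wave_vel (ttm n) (window_len n) has_integral
      (wave_pos (ttm n) (window_len n) t - wave_pos (ttm n) (window_len n) (ttm n))) {ttm n..t}"
    by (rule wave_vel_has_integral[OF window_len_pos[OF n] t(1)])
  from has_integral_mult_right[OF this, of "wt tau n"]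
  have "((\<lambda>x. wt tau n * wave_vel (ttm n) (window_len n) x) has_integral pos_x_win tau n t) {ttm n..t}"
    by (simp add: wave_pos_start pos_x_win_def)
  then show ?thesis
    by (rule has_integral_eq[rotated]) (use vel_x_on_window[OF n] t in \<open>auto simp: vel_x_win_def\<close>)
qed

lemma vel_x_has_integral_upto_ttp: "(vel_x tau has_integral 0) {0..ttp n}"
proof (induction n)
  case 0
  show ?case by (simp add: ttp_0 has_integral_refl(2))
next
  case (Suc n)
  have m: "Suc n \<ge> 1" by simp
  have gap: "ttp n \<le> ttm (Suc n)" using ttp_pred_le_ttm[OF m] by simp
  have win: "ttm (Suc n) \<le> ttp (Suc n)" using ttm_less_ttp[OF m] by simp
  have "(vel_x tau has_integral (0 + 0)) {0..ttm (Suc n)}"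
    by (rule has_integral_combine[OF ttp_nonneg gap Suc.IH])
       (use vel_x_has_integral_gap[OF m, of "ttm (Suc n)" tau] gap in simp)
  then have "(vel_x tau has_integral (0 + pos_x_win tau (Suc n) (ttp (Suc n)))) {0..ttp (Suc n)}"
    by (intro has_integral_combine[OF _ win _ vel_x_has_integral_window[OF m win order_refl]])
       (use gap ttp_nonneg[of n] in auto)
  then show ?case using pos_x_win_end[OF m] by simp
qed

lemma vel_x_has_integral_upto_ttm:
  assumes n: "n \<ge> 1"
  shows "(vel_x tau has_integral 0) {0..ttm n}"
  using has_integral_combine[OF ttp_nonneg ttp_pred_le_ttm[OF n] vel_x_has_integral_upto_ttp
      vel_x_has_integral_gap[OF n ttp_pred_le_ttm[OF n] order_refl]]
  by simp

lemma pos_x_on_gap: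
  assumes n: "n \<ge> 1" and t: "ttp (n - 1) \<le> t" "t \<le> ttm n"
  shows "pos_x tau t = 0"
proof -
  have "(vel_x tau has_integral (0 + 0)) {0..t}"
    by (rule has_integral_combine[OF ttp_nonneg t(1) vel_x_has_integral_upto_ttp
          vel_x_has_integral_gap[OF n t]])
  then show ?thesis unfolding pos_x_def using integral_unique by auto
qed

lemma pos_x_on_window:
  assumes n: "n \<ge> 1" and t: "ttm n \<le> t" "t \<le> ttp n"
  shows "pos_x tau t = pos_x_win tau n t"
proof -
  have "(vel_x tau has_integral (0 + pos_x_win tau n t)) {0..t}"
    using has_integral_combine[OF _ t(1) vel_x_has_integral_upto_ttm[OF n] vel_x_has_integral_window[OF n t]]
      ttp_pred_le_ttm[OF n] ttp_nonneg[of "n - 1"] by simp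
  then show ?thesis unfolding pos_x_def using integral_unique by auto
qed

section \<open>Continuity and endpoints\<close>

lemma wt_bounds: "0 \<le> wt tau n \<and> wt tau n \<le> 1"
  by (cases "tau n") (auto simp: wt_def power_le_one)

lemma square_le_of_le_twice:
  fixes x d :: real
  assumes "0 \<le> x" "x \<le> 2 * d" "d \<le> 1"
  shows "x\<^sup>2 \<le> 4 * d"
proof -
  have "x\<^sup>2 \<le> (2 * d)\<^sup>2" by (rule power_mono) (use assms in auto)
  also have "\<dots> = 4 * d * d" by (simp add: power2_eq_square)
  also have "\<dots> \<le> 4 * d" using assms by (intro mult_left_le) auto
  finally show ?thesis .
qed

lemma bump_len_le: "n \<ge> 1 \<Longrightarrow> bump_len n \<le> 2 * decay n"
proof -
  assume n: "n \<ge> 1"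
  have "decay n * (5 * (exp 1 - 1)) \<le> decay n * 12"
    using exp1_le_3 decay_pos[of n] by (intro mult_left_mono) auto
  then show ?thesis by (simp add: bump_len_eq_decay[OF n] algebra_simps)
qed

lemma wiggle_len_le: "n \<ge> 1 \<Longrightarrow> wiggle_len n \<le> 2 * decay n"
proof -
  assume n: "n \<ge> 1"
  have "wiggle_len n = decay n * (exp 1 - 1) / (6 * real n)" by (rule wiggle_len_eq_decay[OF n])
  also have "\<dots> \<le> decay n * (exp 1 - 1) / 1" using n decay_pos[of n] exp1_ge_2
    by (intro divide_left_mono) auto
  also have "\<dots> \<le> 2 * decay n" using exp1_le_3 decay_pos[of n] by simp
  finally show ?thesis .
qed

lemma abs_vel_y_seg_le:
  assumes n: "n \<ge> 1"
  shows "\<bar>vel_y_seg n t\<bar> \<le> 4 * decay n"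
proof (cases "t \<le> bump_end n")
  case True
  have "\<bar>bump_vel (tt (n - 1)) (bump_len n) t\<bar> \<le> (bump_len n)\<^sup>2 / (4 * pi)"
    using bump_vel_nonneg[OF bump_len_pos[OF n]] bump_vel_le[OF bump_len_pos[OF n]] by auto
  also have "\<dots> \<le> (bump_len n)\<^sup>2" using pi_gt3 by (simp add: divide_le_eq mult_le_cancel_left1)
  also have "\<dots> \<le> 4 * decay n"
    by (rule square_le_of_le_twice) (use bump_len_pos[OF n] bump_len_le[OF n] decay_le_1 in auto)
  finally show ?thesis using True by (simp add: vel_y_seg_def)
next
  case False
  have "\<bar>wave_vel (bump_end n) (wiggle_len n) t\<bar> \<le> (wiggle_len n)\<^sup>2 / (16 * pi)"
    by (rule abs_wave_vel_le[OF wiggle_len_pos[OF n]])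
  also have "\<dots> \<le> (wiggle_len n)\<^sup>2" using pi_gt3 by (simp add: divide_le_eq mult_le_cancel_left1)
  also have "\<dots> \<le> 4 * decay n"
    by (rule square_le_of_le_twice) (use wiggle_len_pos[OF n] wiggle_len_le[OF n] decay_le_1 in auto)
  finally show ?thesis using False by (simp add: vel_y_seg_def)
qed

lemma abs_vel_y_le:
  assumes t: "0 \<le> t" "t < 1"
  shows "\<bar>vel_y t\<bar> \<le> 4 * (1 - t)"
proof -
  obtain n where n: "n \<ge> 1" "tt (n - 1) \<le> t" "t < tt n" using tt_segment_exists[OF t] by blast
  then have "decay n \<le> 1 - t" by (simp add: tt_eq_decay)
  then show ?thesis using vel_y_eq_seg[OF n(1,2)] n(3) abs_vel_y_seg_le[OF n(1), of t] by simp
qed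

lemma abs_vel_x_win_le:
  assumes n: "n \<ge> 1"
  shows "\<bar>vel_x_win tau n t\<bar> \<le> window_len n"
proof -
  have "decay n * (exp 1 - 1) \<le> 1 * 2" by (rule mult_mono) (use decay_le_1[of n] exp1_le_3 exp1_ge_2 in auto)
  then have window: "window_len n \<le> 1" "0 < window_len n"
    using window_len_eq_decay[OF n] window_len_pos[OF n] by auto
  have "\<bar>vel_x_win tau n t\<bar> \<le> 1 * ((window_len n)\<^sup>2 / (16 * pi))"
    unfolding vel_x_win_def abs_mult
    by (rule mult_mono) (use wt_bounds[of tau n] abs_wave_vel_le[OF window_len_pos[OF n]] in auto)
  also have "\<dots> \<le> (window_len n)\<^sup>2" using pi_gt3 by (simp add: divide_le_eq mult_le_cancel_left1)
  also have "\<dots> \<le> window_len n" using window by (simp add: power2_eq_square mult_le_cancel_right1)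
  finally show ?thesis .
qed

lemma abs_vel_x_le:
  assumes t: "0 \<le> t" "t < 1"
  shows "\<bar>vel_x tau t\<bar> \<le> 4 * (1 - t)"
proof -
  obtain n where n: "n \<ge> 1" "ttp (n - 1) \<le> t" "t < ttp n" using ttp_segment_exists[OF t] by blast
  show ?thesis
  proof (cases "t \<le> ttm n")
    case True
    then show ?thesis using vel_x_on_gap[OF n(1,2)] t by simp
  next
    case False
    have "decay n * 3 \<le> decay n * (6 - exp 1)" using exp1_le_3 decay_pos[of n] by simp
    then have near_1: "3 * decay n \<le> 5 * (1 - t)" using n ttp_eq_decay[OF n(1)] by simp
    have "decay n * (2 * (exp 1 - 1)) \<le> decay n * 4"
      using exp1_le_3 decay_pos[of n] by (intro mult_left_mono) auto
    then have "5 * window_len n \<le> 4 * decay n" using window_len_eq_decay[OF n(1)] by (simp add: algebra_simps)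
    then show ?thesis
      using near_1 vel_x_on_window[OF n(1)] abs_vel_x_win_le[OF n(1), of tau t] False n(3) by simp
  qed
qed

lemma continuous_on_unit_interval:
  fixes f :: "real \<Rightarrow> 'a::topological_space"
  assumes below: "\<And>N. continuous_on {0..tt N} f" and at_1: "continuous (at 1 within {0..1}) f"
  shows "continuous_on {0..1} f"
  unfolding continuous_on_eq_continuous_within
proof
  fix t :: real assume t: "t \<in> {0..1}"
  show "continuous (at t within {0..1}) f"
  proof (cases "t = 1")
    case False
    then obtain N where N: "t < tt N" using tt_exceeds t by fastforce
    have "at t within {0..1} = at t within {0..tt N}"
      by (rule at_within_nhd[of _ "{..<tt N}"]) (use N tt_less_1[of N] in auto)
    then show ?thesis using below[of N] t N by (simp add: continuous_on_eq_continuous_within)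
  qed (use at_1 in simp)
qed

text \<open>Redefined as 0 at \<open>t = 1\<close>, such a function becomes continuous on \<open>[0, 1]\<close>.\<close>
lemma integrable_on_unit_interval:
  fixes f :: "real \<Rightarrow> real"
  assumes cont: "\<And>N. continuous_on {0..tt N} f"
    and bound: "\<And>t. 0 \<le> t \<Longrightarrow> t < 1 \<Longrightarrow> \<bar>f t\<bar> \<le> 4 * (1 - t)"
  shows "f integrable_on {0..1}"
proof -
  define W where "W t = (if t = 1 then 0 else f t)" for t
  have "continuous_on {0..tt N} W" for N
    by (rule continuous_on_eq[OF cont]) (use tt_less_1[of N] in \<open>auto simp: W_def\<close>)
  moreover have "(W \<longlongrightarrow> 0) (at 1 within {0..1})"
  proof (rule Lim_null_comparison)
    show "\<forall>\<^sub>F x in at 1 within {0..1}. norm (W x) \<le> 4 * (1 - x)"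
      unfolding eventually_at_filter
    proof (intro always_eventually allI impI)
      fix x :: real assume "x \<noteq> 1" "x \<in> {0..1}"
      then show "norm (W x) \<le> 4 * (1 - x)" using bound[of x] by (simp add: W_def)
    qed
    show "((\<lambda>x::real. 4 * (1 - x)) \<longlongrightarrow> (0::real)) (at 1 within {0..1})"
      by (auto intro!: tendsto_eq_intros)
  qed
  ultimately have "continuous_on {0..1} W"
    by (intro continuous_on_unit_interval) (auto simp: continuous_within W_def)
  then have "W integrable_on {0..1}" by (rule integrable_continuous_interval)
  then show ?thesis
    by (rule integrable_spike_finite[where S="{1}", rotated 2]) (auto simp: W_def)
qed

lemma continuous_on_vel_y: "continuous_on {0..tt N} vel_y"
  unfolding vel_y_def[abs_def]
  by (rule indefinite_integral_continuous_1) (use acc_y_has_integral_upto_tt in blast)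

lemma continuous_on_vel_x: "continuous_on {0..tt N} (vel_x tau)"
proof -
  have "continuous_on {0..ttp N} (vel_x tau)"
    unfolding vel_x_def[abs_def]
    by (rule indefinite_integral_continuous_1) (use acc_x_has_integral_upto_ttp in blast)
  moreover have "tt N \<le> ttp N" using grid_order(5)[of N] by (cases "N = 0") (auto simp: tt_0 ttp_0)
  ultimately show ?thesis using continuous_on_subset by fastforce
qed

lemma continuous_on_pos_y: "continuous_on {0..1} pos_y"
  unfolding pos_y_def[abs_def]
  by (rule indefinite_integral_continuous_1 integrable_on_unit_interval continuous_on_vel_y abs_vel_y_le)+

lemma continuous_on_pos_x: "continuous_on {0..1} (pos_x tau)"
  unfolding pos_x_def[abs_def]
  by (rule indefinite_integral_continuous_1 integrable_on_unit_interval continuous_on_vel_x abs_vel_x_le)+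

text \<open>\<open>c\<^sub>k\<^sup>3/(8\<pi>) = K q\<^sup>k\<close> with \<open>q = e\<^sup>-\<^sup>3\<close>, a geometric series.\<close>
lemma y_level_tendsto: "y_level \<longlonglongrightarrow> 5^3 * (exp 1 - 1)^3 / (6^3 * 8 * pi * (exp 1 ^ 3 - 1))"
proof -
  define q :: real where "q = exp (-3)"
  define K where "K = (5 * (exp 1 - 1) / 6) ^ 3 / (8 * pi)"
  have q: "0 < q" "q < 1" by (auto simp: q_def)
  have term_eq: "bump_len k ^ 3 / (8 * pi) = K * q ^ k" if k: "k \<ge> 1" for k
  proof -
    have a: "exp (- real k) ^ 3 = exp (real 3 * (- real k))" by (rule exp_of_nat_mult[symmetric])
    have b: "exp (-3) ^ k = exp (real k * (-3::real))" by (rule exp_of_nat_mult[symmetric])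
    have "decay k ^ 3 = q ^ k" unfolding decay_def q_def a b by (simp add: mult.commute)
    moreover have len: "bump_len k = (5 * (exp 1 - 1) / 6) * decay k"
      using bump_len_eq_decay[OF k] by simp
    have "bump_len k ^ 3 = (5 * (exp 1 - 1) / 6) ^ 3 * decay k ^ 3"
      by (subst len) (rule power_mult_distrib)
    ultimately show ?thesis by (simp add: K_def)
  qed
  have partial_sum: "y_level n = K * q * (\<Sum>k<n. q ^ k)" for n
  proof -
    have "y_level n = (\<Sum>k\<in>{1..n}. K * q ^ k)"
      unfolding y_level_def by (rule sum.cong) (auto simp: term_eq)
    also have "\<dots> = (\<Sum>k<n. K * q ^ Suc k)"
      using sum.atLeast1_atMost_eq[of "\<lambda>k. K * q ^ k" n] by simp
    also have "\<dots> = K * q * (\<Sum>k<n. q ^ k)" by (simp add: sum_distrib_left mult.assoc)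
    finally show ?thesis .
  qed
  have "(\<lambda>n. \<Sum>k<n. q ^ k) \<longlonglongrightarrow> 1 / (1 - q)"
    using geometric_sums[of q] q by (simp add: sums_def)
  then have "y_level \<longlonglongrightarrow> K * q * (1 / (1 - q))"
    unfolding partial_sum[abs_def] by (intro tendsto_intros)
  moreover have "K * q * (1 / (1 - q)) = 5^3 * (exp 1 - 1)^3 / (6^3 * 8 * pi * (exp 1 ^ 3 - 1))"
  proof -
    have exp3: "exp 1 ^ 3 = exp (3::real)" using exp_of_nat_mult[of 3 "1::real"] by simp
    have q_eq: "q = 1 / exp 3" by (simp add: q_def exp_minus field_simps)
    have "exp (3::real) > 1" by simp
    then have "q * (1 / (1 - q)) = 1 / (exp 3 - 1)" unfolding q_eq by (simp add: field_simps)
    then have "K * q * (1 / (1 - q)) = K * (1 / (exp 3 - 1))" by (simp only: mult.assoc)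
    also have "\<dots> = 5^3 * (exp 1 - 1)^3 / (6^3 * 8 * pi * (exp 3 - 1))"
    proof -
      have "(5 * exp 1 - 5) ^ 3 = 125 * (exp 1 - 1 :: real) ^ 3"
        by (simp add: power3_eq_cube algebra_simps)
      then show ?thesis by (simp add: K_def power_divide power_mult_distrib)
    qed
    finally show ?thesis unfolding exp3 .
  qed
  ultimately show ?thesis by simp
qed

lemma pos_y_1: "pos_y 1 = 5^3 * (exp 1 - 1)^3 / (6^3 * 8 * pi * (exp 1 ^ 3 - 1))"
proof -
  have "(\<lambda>n. pos_y (tt n)) \<longlonglongrightarrow> pos_y 1"
    by (rule continuous_on_tendsto_compose[OF continuous_on_pos_y tt_tendsto_1])
       (auto intro!: always_eventually simp: tt_nonneg tt_less_1 less_imp_le)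
  then have "y_level \<longlonglongrightarrow> pos_y 1" unfolding pos_y_tt .
  then show ?thesis using y_level_tendsto LIMSEQ_unique by blast
qed

lemma pos_x_1: "pos_x tau 1 = 0"
proof -
  have "(\<lambda>n. pos_x tau (ttp (Suc n))) \<longlonglongrightarrow> pos_x tau 1"
    by (rule continuous_on_tendsto_compose[OF continuous_on_pos_x ttp_Suc_tendsto_1])
       (auto intro!: always_eventually simp: ttp_nonneg ttp_less_1 less_imp_le)
  moreover have "pos_x tau (ttp (Suc n)) = 0" for n
    using pos_x_on_gap[of "Suc (Suc n)" "ttp (Suc n)" tau] ttp_less_ttm[of "Suc n" "Suc (Suc n)"] by simp
  ultimately have "(\<lambda>n. 0) \<longlonglongrightarrow> pos_x tau 1" by simp
  then show ?thesis by (simp add: LIMSEQ_const_iff)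
qed

section \<open>Monotonicity within a segment\<close>

lemma y_level_mono: "m \<le> n \<Longrightarrow> y_level m \<le> y_level n"
proof -
  have "0 \<le> bump_len k ^ 3 / (8 * pi)" if "1 \<le> k" for k using bump_len_pos[OF that] by simp
  then show "m \<le> n \<Longrightarrow> y_level m \<le> y_level n" unfolding y_level_def by (intro sum_mono2) auto
qed

lemma y_level_less_pos_y_1: "y_level n < pos_y 1"
proof -
  have "incseq y_level" by (rule incseq_SucI) (simp add: y_level_mono)
  moreover have "y_level \<longlonglongrightarrow> pos_y 1" using y_level_tendsto pos_y_1 by simp
  ultimately have "y_level (Suc n) \<le> pos_y 1" by (rule incseq_le)
  moreover have "y_level n < y_level (Suc n)" using y_level_Suc[of "Suc n"] bump_len_pos[of "Suc n"] by simp
  ultimately show ?thesis by simp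
qed

lemma pos_y_strict_mono_bump:
  assumes n: "n \<ge> 1" and st: "tt (n - 1) \<le> s" "s < s'" "s' \<le> bump_end n"
  shows "pos_y s < pos_y s'"
proof -
  have "s' \<le> tt n" using st grid_order[OF n] by linarith
  then have "pos_y s = y_level (n - 1) + bump_pos (tt (n - 1)) (bump_len n) s"
       "pos_y s' = y_level (n - 1) + bump_pos (tt (n - 1)) (bump_len n) s'"
    using pos_y_eq_seg[OF n] st by (auto simp: pos_y_seg_def)
  moreover have "bump_pos (tt (n - 1)) (bump_len n) s < bump_pos (tt (n - 1)) (bump_len n) s'"
    by (rule bump_pos_strict_mono[OF bump_len_pos[OF n] st(1,2)]) (use st in \<open>simp add: bump_end_eq\<close>)
  ultimately show ?thesis by simp
qed

lemma pos_y_bump_end: "n \<ge> 1 \<Longrightarrow> pos_y (bump_end n) = y_level n"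
  using pos_y_eq_seg[of n "bump_end n"] grid_order[of n] bump_pos_end[OF bump_len_pos, of n "tt (n - 1)"]
    y_level_Suc[of n]
  by (simp add: pos_y_seg_def bump_end_eq)

definition y_cut :: "nat \<Rightarrow> real" where "y_cut n = pos_y (cut_pt n)"

lemma y_cut_eq:
  assumes n: "n \<ge> 1"
  shows "y_cut n = y_level (n - 1) + bump_len n ^ 3 / (8 * pi) * (3 / 4 + 1 / (2 * pi))"
proof -
  have "cut_pt n \<le> bump_end n" "tt (n - 1) \<le> cut_pt n" using grid_order[OF n] by linarith+
  then have "pos_y (cut_pt n) = y_level (n - 1) + bump_pos (tt (n - 1)) (bump_len n) (cut_pt n)"
    using pos_y_eq_seg[OF n, of "cut_pt n"] grid_order[OF n] by (simp add: pos_y_seg_def)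
  then show ?thesis
    using bump_pos_three_quarters[OF bump_len_pos[OF n], of "tt (n - 1)"] by (simp add: y_cut_def cut_pt_def)
qed

lemma y_cut_between:
  assumes n: "n \<ge> 1"
  shows "y_level (n - 1) < y_cut n \<and> y_cut n < y_level n"
proof -
  have rise: "bump_len n ^ 3 / (8 * pi) > 0" using bump_len_pos[OF n] by simp
  have frac: "0 < 3 / 4 + 1 / (2 * pi)" "3 / 4 + 1 / (2 * pi) < 1"
    using pi_gt3 by (auto simp: field_simps)
  have "bump_len n ^ 3 / (8 * pi) * (3 / 4 + 1 / (2 * pi)) < bump_len n ^ 3 / (8 * pi) * 1"
    by (rule mult_strict_left_mono[OF frac(2) rise])
  moreover have "0 < bump_len n ^ 3 / (8 * pi) * (3 / 4 + 1 / (2 * pi))"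
    using rise frac(1) by (rule mult_pos_pos)
  ultimately show ?thesis using y_cut_eq[OF n] y_level_Suc[OF n] by simp
qed

text \<open>The wiggles are too shallow to bring \<open>s\<^sub>y\<close> back down to its height at \<open>q\<^sub>n\<close>.\<close>
lemma wave_pos_wiggle_less:
  assumes n: "n \<ge> 1"
  shows "wave_pos (bump_end n) (wiggle_len n) t < bump_len n ^ 3 / (8 * pi) * (1 - (3 / 4 + 1 / (2 * pi)))"
proof -
  have c: "bump_len n > 0" using bump_len_pos[OF n] .
  have h: "wiggle_len n > 0" using wiggle_len_pos[OF n] .
  have "wiggle_len n = decay n * (exp 1 - 1) / (6 * real n)" by (rule wiggle_len_eq_decay[OF n])
  also have "\<dots> \<le> decay n * (exp 1 - 1) / 6" using n decay_pos[of n] exp1_ge_2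
    by (intro divide_left_mono) auto
  also have "\<dots> = bump_len n / 5" by (simp add: bump_len_eq_decay[OF n])
  finally have "wiggle_len n ^ 3 \<le> (bump_len n / 5) ^ 3" by (rule power_mono) (use h in simp)
  then have "wiggle_len n ^ 3 / (64 * pi\<^sup>2) * (pi + 1) \<le> (bump_len n / 5) ^ 3 / (64 * pi\<^sup>2) * (pi + 1)"
    by (intro mult_right_mono divide_right_mono) auto
  with wave_pos_le[OF h, of "bump_end n" t]
  have "wave_pos (bump_end n) (wiggle_len n) t \<le> (bump_len n / 5) ^ 3 / (64 * pi\<^sup>2) * (pi + 1)"
    by linarith
  also have "\<dots> = bump_len n ^ 3 * ((pi + 1) / (8000 * pi\<^sup>2))" by (simp add: power_divide)
  also have "\<dots> < bump_len n ^ 3 * ((pi - 2) / (32 * pi\<^sup>2))"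
  proof (rule mult_strict_left_mono)
    have "(pi + 1) * 32 < (pi - 2) * 8000" using pi_gt3 by simp
    then show "(pi + 1) / (8000 * pi\<^sup>2) < (pi - 2) / (32 * pi\<^sup>2)"
      by (simp add: field_simps)
  qed (use c in simp)
  also have "\<dots> = bump_len n ^ 3 / (8 * pi) * (1 - (3 / 4 + 1 / (2 * pi)))"
    by (simp add: field_simps power2_eq_square)
  finally show ?thesis .
qed

lemma pos_y_on_wiggles:
  assumes n: "n \<ge> 1" and t: "bump_end n \<le> t" "t \<le> tt n"
  shows "y_cut n < pos_y t \<and> pos_y t \<le> y_level n"
proof (cases "t = bump_end n")
  case True
  then show ?thesis using pos_y_bump_end[OF n] y_cut_between[OF n] by simp
next
  case False
  then have "bump_end n < t" "tt (n - 1) \<le> t" using t grid_order[OF n] by linarith+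
  then have "pos_y t = y_level n - wave_pos (bump_end n) (wiggle_len n) t"
    using pos_y_eq_seg[OF n _ t(2)] y_level_Suc[OF n] by (simp add: pos_y_seg_def)
  moreover have "0 \<le> wave_pos (bump_end n) (wiggle_len n) t"
    by (rule wave_pos_nonneg[OF wiggle_len_pos[OF n]])
  moreover have "y_cut n = y_level n - bump_len n ^ 3 / (8 * pi) * (1 - (3 / 4 + 1 / (2 * pi)))"
    using y_cut_eq[OF n] y_level_Suc[OF n] by (simp only: right_diff_distrib mult_1_right)
  ultimately show ?thesis using wave_pos_wiggle_less[OF n, of t] by linarith
qed

lemma pos_y_between_cut_level:
  assumes n: "n \<ge> 1" and t: "cut_pt n \<le> t" "t \<le> tt n"
  shows "y_cut n \<le> pos_y t \<and> pos_y t \<le> y_level n"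
proof (cases "t \<le> bump_end n")
  case True
  have "pos_y (cut_pt n) \<le> pos_y t"
    using pos_y_strict_mono_bump[OF n _ _ True, of "cut_pt n"] grid_order[OF n] t(1)
    by (cases "cut_pt n = t") auto
  moreover have "pos_y t \<le> pos_y (bump_end n)"
    using pos_y_strict_mono_bump[OF n _ _ order_refl, of t] grid_order[OF n] t(1) True
    by (cases "t = bump_end n") auto
  ultimately show ?thesis using pos_y_bump_end[OF n] by (simp add: y_cut_def)
next
  case False
  then show ?thesis using pos_y_on_wiggles[OF n _ t(2)] by simp
qed

lemma pos_y_hits_level:
  assumes n: "n \<ge> 1" and y: "y_cut n \<le> y" "y \<le> y_level n"
  obtains s where "cut_pt n \<le> s" "s \<le> bump_end n" "pos_y s = y"
proof -
  have "\<exists>s. cut_pt n \<le> s \<and> s \<le> bump_end n \<and> pos_y s = y"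
    by (rule IVT') (use y pos_y_bump_end[OF n] grid_order[OF n] continuous_on_pos_y
        tt_nonneg[of "n - 1"] tt_less_1[of n] in \<open>auto simp: y_cut_def intro: continuous_on_subset\<close>)
  then show ?thesis using that by blast
qed

lemma pos_x_strict_mono:
  assumes n: "n \<ge> 1" and w: "wt tau n > 0" and st: "ttm n \<le> s" "s < s'" "s' \<le> tt n"
  shows "pos_x tau s < pos_x tau s'"
proof -
  have "s' \<le> ttp n" using st grid_order[OF n] by linarith
  then have "pos_x tau s = pos_x_win tau n s" "pos_x tau s' = pos_x_win tau n s'"
    using pos_x_on_window[OF n] st by auto
  moreover have "wave_pos (ttm n) (window_len n) s < wave_pos (ttm n) (window_len n) s'"
    by (rule wave_pos_strict_mono[OF window_len_pos[OF n] st(1,2)])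
       (use st ttm_add_half_window[OF n] in simp)
  ultimately show ?thesis using w by (simp add: pos_x_win_def)
qed

lemma pos_x_zero_if_not_halting:
  assumes n: "n \<ge> 1" and w: "wt tau n = 0" and t: "cut_pt n \<le> t" "t \<le> tt n"
  shows "pos_x tau t = 0"
proof (cases "t \<le> ttm n")
  case True
  then show ?thesis using pos_x_on_gap[OF n] grid_order[OF n] t by simp
next
  case False
  then show ?thesis using pos_x_on_window[OF n, of t tau] w t grid_order[OF n] by (simp add: pos_x_win_def)
qed

text \<open>Where \<open>M\<^sub>n\<close> halts, the original curve is already injective on \<open>[t\<^sub>n\<^sub>-\<^sub>1, t\<^sub>n]\<close>: once \<open>s\<^sub>y\<close>
  stops increasing, \<open>s\<^sub>x\<close> starts to.\<close>
lemma svec_neq_if_halting: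
  assumes n: "n \<ge> 1" and w: "wt tau n > 0" and st: "tt (n - 1) \<le> s" "s < s'" "s' \<le> tt n"
  shows "pos_x tau s \<noteq> pos_x tau s' \<or> pos_y s \<noteq> pos_y s'"
proof -
  note order = grid_order[OF n]
  consider "s' \<le> bump_end n" | "bump_end n < s'" "s < cut_pt n"
    | "cut_pt n \<le> s" "s < ttm n" "bump_end n < s'" | "ttm n \<le> s"
    by linarith
  then show ?thesis
  proof cases
    case 1
    then show ?thesis using pos_y_strict_mono_bump[OF n st(1,2)] by simp
  next
    case 2
    then have "pos_y s < y_cut n" using pos_y_strict_mono_bump[OF n st(1), of "cut_pt n"] order
      by (simp add: y_cut_def)
    moreover have "y_cut n < pos_y s'" using pos_y_on_wiggles[OF n _ st(3)] 2 by simp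
    ultimately show ?thesis by simp
  next
    case 3
    then have "pos_x tau s = 0" using pos_x_on_gap[OF n] order by simp
    moreover have "pos_x tau (ttm n) < pos_x tau s'"
      using pos_x_strict_mono[OF n w order_refl _ st(3)] 3 order by simp
    moreover have "pos_x tau (ttm n) = 0" using pos_x_on_gap[OF n] order by simp
    ultimately show ?thesis by simp
  next
    case 4
    then show ?thesis using pos_x_strict_mono[OF n w _ st(2,3)] by simp
  qed
qed

section \<open>The arc\<close>

definition chord :: "nat \<Rightarrow> real \<Rightarrow> real" where
  "chord n t = y_cut n + (t - cut_pt n) / (tt n - cut_pt n) * (y_level n - y_cut n)"

definition arc_y_seg :: "(nat \<Rightarrow> enat) \<Rightarrow> nat \<Rightarrow> real \<Rightarrow> real" where
  "arc_y_seg tau n t = (if wt tau n = 0 \<and> cut_pt n \<le> t then chord n t else pos_y t)"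

text \<open>On \<open>(t\<^sub>n\<^sub>-\<^sub>1, t\<^sub>n]\<close> the index is \<open>n = (LEAST n. t \<le> t\<^sub>n)\<close>; at the common endpoints
  \<open>t\<^sub>n\<close> both neighbouring pieces equal \<open>s\<^sub>y(t\<^sub>n)\<close>.\<close>
definition arc_y :: "(nat \<Rightarrow> enat) \<Rightarrow> real \<Rightarrow> real" where
  "arc_y tau t = (if 0 < t \<and> t < 1 then arc_y_seg tau (LEAST n. t \<le> tt n) t else pos_y t)"

definition arc_curve :: "(nat \<Rightarrow> enat) \<Rightarrow> real \<Rightarrow> real \<times> real" where
  "arc_curve tau t = (pos_x tau t, arc_y tau t)"

lemma chord_cut_pt: "chord n (cut_pt n) = y_cut n"
  by (simp add: chord_def)

lemma chord_tt: "n \<ge> 1 \<Longrightarrow> chord n (tt n) = y_level n"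
  using cut_pt_less_tt[of n] by (simp add: chord_def)

lemma continuous_on_chord: "n \<ge> 1 \<Longrightarrow> continuous_on S (chord n)"
  unfolding chord_def[abs_def] using cut_pt_less_tt[of n] by (intro continuous_intros) auto

lemma chord_bounds:
  assumes n: "n \<ge> 1" and t: "cut_pt n \<le> t" "t \<le> tt n"
  shows "y_cut n \<le> chord n t \<and> chord n t \<le> y_level n"
proof -
  have D: "tt n - cut_pt n > 0" using cut_pt_less_tt[OF n] by simp
  have r: "0 \<le> (t - cut_pt n) / (tt n - cut_pt n)" "(t - cut_pt n) / (tt n - cut_pt n) \<le> 1"
    using t D by (auto simp: divide_le_eq)
  have Y: "y_level n - y_cut n > 0" using y_cut_between[OF n] by simp
  have "(t - cut_pt n) / (tt n - cut_pt n) * (y_level n - y_cut n) \<le> 1 * (y_level n - y_cut n)"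
    by (rule mult_right_mono[OF r(2)]) (use Y in simp)
  moreover have "0 \<le> (t - cut_pt n) / (tt n - cut_pt n) * (y_level n - y_cut n)"
    by (rule mult_nonneg_nonneg) (use r Y in auto)
  ultimately show ?thesis by (simp add: chord_def)
qed

lemma chord_strict_mono:
  assumes n: "n \<ge> 1" and st: "s < s'"
  shows "chord n s < chord n s'"
proof -
  have D: "tt n - cut_pt n > 0" using cut_pt_less_tt[OF n] by simp
  have Y: "y_level n - y_cut n > 0" using y_cut_between[OF n] by simp
  have "(s - cut_pt n) / (tt n - cut_pt n) < (s' - cut_pt n) / (tt n - cut_pt n)"
    using st D by (simp add: divide_strict_right_mono)
  then have "(s - cut_pt n) / (tt n - cut_pt n) * (y_level n - y_cut n)
      < (s' - cut_pt n) / (tt n - cut_pt n) * (y_level n - y_cut n)"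
    using Y by (rule mult_strict_right_mono)
  then show ?thesis unfolding chord_def by (rule add_strict_left_mono)
qed

lemma chord_hits_level:
  assumes n: "n \<ge> 1" and y: "y_cut n \<le> y" "y \<le> y_level n"
  obtains s where "cut_pt n \<le> s" "s \<le> tt n" "chord n s = y"
proof -
  have "\<exists>s. cut_pt n \<le> s \<and> s \<le> tt n \<and> chord n s = y"
    by (rule IVT') (use y chord_cut_pt chord_tt[OF n] cut_pt_less_tt[OF n] continuous_on_chord[OF n] in auto)
  then show ?thesis using that by blast
qed

lemma arc_y_eq_seg:
  assumes n: "n \<ge> 1" and t: "tt (n - 1) \<le> t" "t \<le> tt n"
  shows "arc_y tau t = arc_y_seg tau n t"
proof -
  have t1: "t < 1" using t tt_less_1[of n] by linarith
  have at_start: "arc_y_seg tau n t = pos_y t" if "t = tt (n - 1)"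
    using that grid_order[OF n] by (simp add: arc_y_seg_def)
  show ?thesis
  proof (cases "t = tt (n - 1)")
    case False
    then have "tt (n - 1) < t" using t by simp
    moreover have "0 < t" using calculation tt_nonneg[of "n - 1"] by linarith
    ultimately show ?thesis using Least_tt_segment[OF n _ t(2)] t1 by (simp add: arc_y_def)
  next
    case True
    show ?thesis
    proof (cases "n = 1")
      case True
      then have "t = 0" using \<open>t = tt (n - 1)\<close> by (simp add: tt_0)
      then show ?thesis using at_start \<open>t = tt (n - 1)\<close> by (simp add: arc_y_def)
    next
      case False
      then have m: "n - 1 \<ge> 1" using n by simp
      have "tt (n - 1 - 1) < tt (n - 1)" using m by (intro tt_strict_mono) simp
      then have "(LEAST k. t \<le> tt k) = n - 1" using Least_tt_segment[OF m] True by simp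
      moreover have "0 < t" using True tt_strict_mono[of 0 "n - 1"] m tt_0 by simp
      ultimately have "arc_y tau t = arc_y_seg tau (n - 1) (tt (n - 1))"
        using t1 True by (simp add: arc_y_def)
      also have "\<dots> = pos_y t" using chord_tt[OF m] pos_y_tt[of "n - 1"] True by (simp add: arc_y_seg_def)
      finally show ?thesis using at_start True by simp
    qed
  qed
qed

lemma arc_y_seg_bounds:
  assumes n: "n \<ge> 1" and t: "tt (n - 1) \<le> t" "t \<le> tt n"
  shows "y_level (n - 1) \<le> arc_y_seg tau n t" "arc_y_seg tau n t \<le> y_level n"
    and "tt (n - 1) < t \<Longrightarrow> y_level (n - 1) < arc_y_seg tau n t"
proof -
  have "y_level (n - 1) \<le> arc_y_seg tau n t \<and> arc_y_seg tau n t \<le> y_level n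
    \<and> (tt (n - 1) < t \<longrightarrow> y_level (n - 1) < arc_y_seg tau n t)"
  proof (cases "wt tau n = 0 \<and> cut_pt n \<le> t")
    case True
    then show ?thesis using chord_bounds[OF n _ t(2)] y_cut_between[OF n] by (simp add: arc_y_seg_def)
  next
    case False
    then have g: "arc_y_seg tau n t = pos_y t" unfolding arc_y_seg_def by (simp only: if_not_P if_False)
    show ?thesis
    proof (cases "t \<le> bump_end n")
      case True
      have "pos_y t \<le> y_level n"
        using pos_y_strict_mono_bump[OF n t(1), of "bump_end n"] True pos_y_bump_end[OF n]
        by (cases "t = bump_end n") auto
      moreover have "tt (n - 1) < t \<longrightarrow> y_level (n - 1) < pos_y t"
        using pos_y_strict_mono_bump[OF n order_refl, of t] True pos_y_tt[of "n - 1"] by auto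
      moreover have "y_level (n - 1) \<le> pos_y t"
        using calculation(2) t pos_y_tt[of "n - 1"] by (cases "t = tt (n - 1)") auto
      ultimately show ?thesis using g by simp
    next
      case False
      then show ?thesis using pos_y_on_wiggles[OF n _ t(2)] y_cut_between[OF n] g by simp
    qed
  qed
  then show "y_level (n - 1) \<le> arc_y_seg tau n t" "arc_y_seg tau n t \<le> y_level n"
    and "tt (n - 1) < t \<Longrightarrow> y_level (n - 1) < arc_y_seg tau n t" by auto
qed

lemma arc_y_seg_strict_mono:
  assumes n: "n \<ge> 1" and w: "wt tau n = 0" and st: "tt (n - 1) \<le> s" "s < s'" "s' \<le> tt n"
  shows "arc_y_seg tau n s < arc_y_seg tau n s'"
proof (cases "cut_pt n \<le> s")
  case True
  then show ?thesis using chord_strict_mono[OF n st(2)] w st by (simp add: arc_y_seg_def)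
next
  case False
  note order = grid_order[OF n]
  show ?thesis
  proof (cases "cut_pt n \<le> s'")
    case True
    have "pos_y s < pos_y (cut_pt n)"
      using pos_y_strict_mono_bump[OF n st(1), of "cut_pt n"] False order by simp
    moreover have "y_cut n \<le> chord n s'" using chord_bounds[OF n True st(3)] by simp
    ultimately show ?thesis using False True w by (simp add: arc_y_seg_def y_cut_def)
  next
    case False': False
    have "pos_y s < pos_y s'" using pos_y_strict_mono_bump[OF n st(1,2)] False' order by simp
    then show ?thesis using False False' by (simp add: arc_y_seg_def)
  qed
qed

lemma arc_curve_neq_same_seg:
  assumes n: "n \<ge> 1" and st: "tt (n - 1) \<le> s" "s < s'" "s' \<le> tt n"
  shows "arc_curve tau s \<noteq> arc_curve tau s'"
proof -
  have arc_y: "arc_y tau s = arc_y_seg tau n s" "arc_y tau s' = arc_y_seg tau n s'"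
    using arc_y_eq_seg[OF n] st by auto
  show ?thesis
  proof (cases "wt tau n = 0")
    case True
    then show ?thesis using arc_y_seg_strict_mono[OF n True st] arc_y by (simp add: arc_curve_def)
  next
    case False
    then have "arc_y tau s = pos_y s" "arc_y tau s' = pos_y s'"
      using arc_y by (auto simp: arc_y_seg_def)
    moreover have "wt tau n > 0" using False wt_bounds[of tau n] by simp
    ultimately show ?thesis using svec_neq_if_halting[OF n _ st] by (auto simp: arc_curve_def)
  qed
qed

text \<open>Across segments, \<open>arc_y\<close> separates the points: on \<open>(t\<^sub>n\<^sub>-\<^sub>1, t\<^sub>n]\<close> it lies in
  \<open>(Y\<^sub>n\<^sub>-\<^sub>1, Y\<^sub>n]\<close>, where \<open>Y\<^sub>n = s\<^sub>y(t\<^sub>n)\<close> increases strictly.\<close>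
lemma inj_on_arc_curve: "inj_on (arc_curve tau) {0..1}"
proof -
  have neq: "arc_curve tau s \<noteq> arc_curve tau s'" if st: "0 \<le> s" "s < s'" "s' \<le> 1" for s s'
  proof -
    obtain n where n: "n \<ge> 1" "tt (n - 1) \<le> s" "s < tt n" using tt_segment_exists[of s] st by auto
    have below: "arc_y tau s \<le> y_level n"
      using arc_y_eq_seg[OF n(1,2)] arc_y_seg_bounds(2)[OF n(1,2)] n(3) by simp
    show ?thesis
    proof (cases "s' = 1")
      case True
      then show ?thesis using below y_level_less_pos_y_1[of n] by (auto simp: arc_y_def arc_curve_def)
    next
      case False
      then obtain m where m: "m \<ge> 1" "tt (m - 1) < s'" "s' \<le> tt m"
        using tt_segment_exists_left_open[of s'] st by auto
      have above: "y_level (m - 1) < arc_y tau s'"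
        using arc_y_eq_seg[OF m(1) _ m(3)] arc_y_seg_bounds(3)[OF m(1) _ m(3)] m(2) by simp
      show ?thesis
      proof (cases "n \<le> m - 1")
        case True
        then show ?thesis using y_level_mono[OF True] below above by (auto simp: arc_curve_def)
      next
        case False
        then have "m - 1 \<le> n - 1" by simp
        then have "tt (m - 1) \<le> s" using tt_mono n(2) by (meson order_trans)
        then show ?thesis using arc_curve_neq_same_seg[OF m(1) _ st(2) m(3)] by simp
      qed
    qed
  qed
  show ?thesis
  proof (rule inj_onI)
    fix s s' assume "s \<in> {0..1}" "s' \<in> {0..1}" "arc_curve tau s = arc_curve tau s'"
    then show "s = s'" using neq[of s s'] neq[of s' s] by (cases s s' rule: linorder_cases) auto
  qed
qed

lemma continuous_on_arc_y_seg:
  assumes n: "n \<ge> 1"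
  shows "continuous_on {tt (n - 1)..tt n} (arc_y_seg tau n)"
proof -
  have pos_y: "continuous_on {tt (n - 1)..tt n} pos_y"
    by (rule continuous_on_subset[OF continuous_on_pos_y]) (use tt_nonneg[of "n - 1"] tt_less_1[of n] in auto)
  show ?thesis
  proof (cases "wt tau n = 0")
    case False
    show ?thesis by (rule continuous_on_eq[OF pos_y]) (use False in \<open>simp add: arc_y_seg_def\<close>)
  next
    case True
    note order = grid_order[OF n]
    have "continuous_on {tt (n - 1)..cut_pt n} (arc_y_seg tau n)"
      by (rule continuous_on_eq[OF continuous_on_subset[OF pos_y]])
         (use True chord_cut_pt order in \<open>auto simp: arc_y_seg_def y_cut_def\<close>)
    moreover have "continuous_on {cut_pt n..tt n} (arc_y_seg tau n)"
      by (rule continuous_on_eq[OF continuous_on_chord[OF n]]) (use True in \<open>auto simp: arc_y_seg_def\<close>)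
    moreover have "{tt (n - 1)..tt n} = {tt (n - 1)..cut_pt n} \<union> {cut_pt n..tt n}" using order by auto
    ultimately show ?thesis using continuous_on_closed_Un[of "{tt (n - 1)..cut_pt n}" "{cut_pt n..tt n}"] by simp
  qed
qed

lemma continuous_on_arc_y_tt: "continuous_on {0..tt N} (arc_y tau)"
proof (induction N)
  case 0
  show ?case by (simp add: tt_0)
next
  case (Suc N)
  have "continuous_on {tt N..tt (Suc N)} (arc_y_seg tau (Suc N))"
    using continuous_on_arc_y_seg[of "Suc N" tau] by simp
  then have "continuous_on {tt N..tt (Suc N)} (arc_y tau)"
    by (rule continuous_on_eq) (use arc_y_eq_seg[of "Suc N"] in auto)
  moreover have "{0..tt (Suc N)} = {0..tt N} \<union> {tt N..tt (Suc N)}"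
    using tt_nonneg[of N] tt_strict_mono[of N "Suc N"] by auto
  ultimately show ?case using Suc.IH continuous_on_closed_Un[of "{0..tt N}" "{tt N..tt (Suc N)}"] by simp
qed

text \<open>Near 1 every value of \<open>arc_y\<close> is a value of \<open>s\<^sub>y\<close> at a comparably late time; this
  gives continuity of \<open>arc_y\<close> at 1.\<close>
lemma arc_y_eq_pos_y_near_1:
  assumes t: "0 \<le> t" "t < 1"
  obtains s where "s \<in> {0..1}" "arc_y tau t = pos_y s" "1 - s \<le> 2 * (1 - t)"
proof -
  obtain n where n: "n \<ge> 1" "tt (n - 1) \<le> t" "t < tt n" using tt_segment_exists[OF t] by blast
  have arc: "arc_y tau t = arc_y_seg tau n t" using arc_y_eq_seg[OF n(1,2)] n(3) by simp
  note order = grid_order[OF n(1)]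
  show ?thesis
  proof (cases "wt tau n = 0 \<and> cut_pt n \<le> t")
    case False
    then show ?thesis using that[of t] arc t by (auto simp: arc_y_seg_def)
  next
    case True
    have "y_cut n \<le> chord n t" "chord n t \<le> y_level n" using chord_bounds[OF n(1)] True n(3) by auto
    then obtain s where s: "cut_pt n \<le> s" "s \<le> bump_end n" "pos_y s = chord n t"
      by (rule pos_y_hits_level[OF n(1)])
    have "decay n * (3 * exp 1 + 5) \<le> decay n * 16"
      using exp1_le_3 decay_pos[of n] by (intro mult_left_mono) auto
    then have "1 - cut_pt n \<le> 2 * decay n" using cut_pt_eq_decay[OF n(1)] by simp
    moreover have "decay n \<le> 1 - t" using n(3) by (simp add: tt_eq_decay)
    moreover have "s \<in> {0..1}" using s order tt_nonneg[of "n - 1"] tt_less_1[of n] by auto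
    ultimately show ?thesis using that[of s] s arc True by (auto simp: arc_y_seg_def)
  qed
qed

lemma continuous_on_arc_y: "continuous_on {0..1} (arc_y tau)"
proof (rule continuous_on_unit_interval[OF continuous_on_arc_y_tt])
  have pos_y_at_1: "continuous (at 1 within {0..1}) pos_y"
    using continuous_on_pos_y by (simp add: continuous_on_eq_continuous_within)
  show "continuous (at 1 within {0..1}) (arc_y tau)"
    unfolding continuous_within_eps_delta
  proof (intro allI impI)
    fix e :: real assume e: "e > 0"
    obtain d where d: "d > 0" "\<forall>x\<in>{0..1}. dist x 1 < d \<longrightarrow> dist (pos_y x) (pos_y 1) < e"
      using pos_y_at_1 e unfolding continuous_within_eps_delta by blast
    show "\<exists>d>0. \<forall>x\<in>{0..1}. dist x 1 < d \<longrightarrow> dist (arc_y tau x) (arc_y tau 1) < e"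
    proof (intro exI[of _ "d / 2"] conjI ballI impI)
      fix x :: real assume x: "x \<in> {0..1}" "dist x 1 < d / 2"
      show "dist (arc_y tau x) (arc_y tau 1) < e"
      proof (cases "x = 1")
        case False
        then obtain s where s: "s \<in> {0..1}" "arc_y tau x = pos_y s" "1 - s \<le> 2 * (1 - x)"
          using arc_y_eq_pos_y_near_1[of x tau] x by auto
        then have "dist s 1 < d" using x by (auto simp: dist_real_def)
        then show ?thesis using d s by (simp add: arc_y_def)
      qed (use e in simp)
    qed (use d in simp)
  qed
qed

lemma arc_y_off_curve:
  assumes t: "0 \<le> t" "t \<le> 1" and off: "arc_y tau t \<noteq> pos_y t"
  obtains n where "n \<ge> 1" "wt tau n = 0" "cut_pt n \<le> t" "t \<le> tt n" "arc_y tau t = chord n t"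
proof -
  have "t \<noteq> 1" using off by (auto simp: arc_y_def)
  then obtain n where n: "n \<ge> 1" "tt (n - 1) \<le> t" "t < tt n" using tt_segment_exists[of t] t by auto
  then have "arc_y tau t = arc_y_seg tau n t" using arc_y_eq_seg[OF n(1,2)] by simp
  then show ?thesis using that[of n] n off by (auto simp: arc_y_seg_def split: if_splits)
qed

lemma arc_curve_image_subset: "arc_curve tau ` {0..1} \<subseteq> svec tau ` {0..1}"
proof
  fix z assume "z \<in> arc_curve tau ` {0..1}"
  then obtain t where t: "t \<in> {0..1}" "z = arc_curve tau t" by auto
  show "z \<in> svec tau ` {0..1}"
  proof (cases "arc_y tau t = pos_y t")
    case True
    then have "z = svec tau t" using t(2) by (simp add: arc_curve_def svec_def)
    then show ?thesis using t(1) by blast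
  next
    case False
    obtain n where n: "n \<ge> 1" "wt tau n = 0" "cut_pt n \<le> t" "t \<le> tt n" "arc_y tau t = chord n t"
      by (rule arc_y_off_curve[of t tau]) (use t(1) False in auto)
    have "y_cut n \<le> chord n t" "chord n t \<le> y_level n" using chord_bounds[OF n(1,3,4)] by auto
    then obtain s where s: "cut_pt n \<le> s" "s \<le> bump_end n" "pos_y s = chord n t"
      by (rule pos_y_hits_level[OF n(1)])
    have "pos_x tau s = 0" "pos_x tau t = 0"
      using pos_x_zero_if_not_halting[OF n(1,2)] s n(3,4) grid_order[OF n(1)] by auto
    then have "z = svec tau s" using t(2) n(5) s(3) by (simp add: arc_curve_def svec_def)
    moreover have "s \<in> {0..1}" using s grid_order[OF n(1)] tt_nonneg[of "n - 1"] tt_less_1[of n] by auto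
    ultimately show ?thesis by blast
  qed
qed

lemma svec_image_subset: "svec tau ` {0..1} \<subseteq> arc_curve tau ` {0..1}"
proof
  fix z assume "z \<in> svec tau ` {0..1}"
  then obtain t where t: "t \<in> {0..1}" "z = svec tau t" by auto
  show "z \<in> arc_curve tau ` {0..1}"
  proof (cases "arc_y tau t = pos_y t")
    case True
    then have "z = arc_curve tau t" using t(2) by (simp add: arc_curve_def svec_def)
    then show ?thesis using t(1) by blast
  next
    case False
    obtain n where n: "n \<ge> 1" "wt tau n = 0" "cut_pt n \<le> t" "t \<le> tt n" "arc_y tau t = chord n t"
      by (rule arc_y_off_curve[of t tau]) (use t(1) False in auto)
    have "y_cut n \<le> pos_y t" "pos_y t \<le> y_level n" using pos_y_between_cut_level[OF n(1,3,4)] by auto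
    then obtain s where s: "cut_pt n \<le> s" "s \<le> tt n" "chord n s = pos_y t"
      by (rule chord_hits_level[OF n(1)])
    have "arc_y tau s = chord n s"
      using arc_y_eq_seg[OF n(1) _ s(2)] s(1) grid_order[OF n(1)] n(2) by (simp add: arc_y_seg_def)
    moreover have "pos_x tau s = 0" "pos_x tau t = 0"
      using pos_x_zero_if_not_halting[OF n(1,2)] s n(3,4) by auto
    ultimately have "z = arc_curve tau s" using t(2) s(3) by (simp add: arc_curve_def svec_def)
    moreover have "s \<in> {0..1}" using s grid_order[OF n(1)] tt_nonneg[of "n - 1"] tt_less_1[of n] by auto
    ultimately show ?thesis by blast
  qed
qed

theorem corollary3p7:
  fixes tau :: "nat \<Rightarrow> enat"
  shows "svec tau 0 = (0, 0)
    \<and> svec tau 1 = (0, 5^3 * (exp 1 - 1)^3 / (6^3 * 8 * pi * (exp 1 ^ 3 - 1)))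
    \<and> (\<exists>g :: real \<Rightarrow> real \<times> real. arc g \<and> path_image g = Gam tau
          \<and> pathstart g = svec tau 0 \<and> pathfinish g = svec tau 1)"
proof (intro conjI exI[of _ "arc_curve tau"])
  show "svec tau 0 = (0, 0)" by (simp add: svec_def pos_x_def pos_y_def)
  show "svec tau 1 = (0, 5^3 * (exp 1 - 1)^3 / (6^3 * 8 * pi * (exp 1 ^ 3 - 1)))"
    using pos_x_1 pos_y_1 by (simp add: svec_def)
  have "path (arc_curve tau)" unfolding path_def arc_curve_def[abs_def]
    by (intro continuous_on_Pair continuous_on_pos_x continuous_on_arc_y)
  then show "arc (arc_curve tau)" unfolding arc_def using inj_on_arc_curve by simp
  show "path_image (arc_curve tau) = Gam tau"
    unfolding path_image_def Gam_def using arc_curve_image_subset svec_image_subset by blast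
  show "pathstart (arc_curve tau) = svec tau 0" by (simp add: pathstart_def arc_curve_def svec_def arc_y_def)
  show "pathfinish (arc_curve tau) = svec tau 1" by (simp add: pathfinish_def arc_curve_def svec_def arc_y_def)
qed

end
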